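(* Let $P=P_{(\boldsymbol y,\boldsymbol s)}$ be a $\mathfrak{gl}_{m|n}$ population of solutions of the BAE associated to $\boldsymbol s,\boldsymbol z,\boldsymbol\lambda$, originated at $\boldsymbol y$. Then the rational difference operator $\mathcal R^{\tilde{\boldsymbol s}}(\tilde{\boldsymbol y})$ does not depend on the choice of $(\tilde{\boldsymbol y},\tilde{\boldsymbol s})\in P$.
   Context: Fix $h\in\mathbb{C}^\times$, integers $m,n\ge0$. $\mathbb{K}=\mathbb{C}(x)$; for $f\in\mathbb{K}$, $i\in\mathbb{Z}$ write $f[i](x)=f(x-ih)$. $\mathbb{K}[\tau]$ is the ring of difference operators $\sum_j a_j\tau^j$ ($a_j\in\mathbb{K}$) with $\tau f=f[1]\tau$, and $\mathbb{K}(\tau)$ is its division ring of fractions (rational difference operators). For $g_1,g_2\in\mathbb{K}$, $\epsilon\in\{\pm1\}$ put $\mathrm{Wr}^{\epsilon}(g_1,g_2)=g_1g_2[-\epsilon]-g_2g_1[-\epsilon]$. Parity sequences: $S_{m|n}$ is the set of $\boldsymbol s\in\{\pm1\}^{m+n}$ with exactly $m$ entries equal to $1$; $\sigma_{\boldsymbol s}(i)=\#\{j\le i:s_j=1\}$ if $s_i=1$, $\sigma_{\boldsymbol s}(i)=m+\#\{j\le i:s_j=-1\}$ if $s_i=-1$; $\boldsymbol s^{[i]}$ is $\boldsymbol s$ with entries $i,i+1$ swapped. A polynomial $\mathfrak{gl}_{m|n}$ weight is $\lambda\in\mathbb{Z}_{\ge0}^{m+n}$ with $\lambda_1\ge\dots\ge\lambda_m$,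 $\lambda_{m+1}\ge\dots\ge\lambda_{m+n}$, and $\lambda_{m+k}=0$ for $k>\lambda_m$; $L_\lambda$ is the irreducible module of highest weight $\lambda$. For $\boldsymbol s\in S_{m|n}$, let $v\in L_\lambda$ be the (unique up to scalar) nonzero vector with $e_{\sigma_{\boldsymbol s}(a)\sigma_{\boldsymbol s}(b)}v=0$ for all $a<b$, and let $\lambda^{\boldsymbol s}_i$ be the eigenvalue of $e_{\sigma_{\boldsymbol s}(i)\sigma_{\boldsymbol s}(i)}$ on $v$. For $\boldsymbol\lambda=(\lambda^{(1)},\dots,\lambda^{(p)})$ polynomial weights put $\lambda_i^{(k,\boldsymbol s)}=(\lambda^{(k)})^{\boldsymbol s}_i$. $\boldsymbol z\in\mathbb{C}^p$ is $h$-generic ($z_i-z_j\notin h\mathbb{Z}$ for $i\neq j$). $T_i^{\boldsymbol s}(x)=\prod_{k=1}^p\prod_{j=1}^{\lambda_i^{(k,\boldsymbol s)}}(x-z_k+s_ijh)$. If $s_i\ne s_{i+1}$: $\varphi_i^{\boldsymbol s}=\prod_k(x-z_k+s_i\lambda_i^{(k,\boldsymbol s)}h)$, $\psi_i^{\boldsymbol s}=\prod_k(x-z_k+s_{i+1}\lambda_{i+1}^{(k,\boldsymbol s)}h)$, products over $k$ with $\lambda_i^{(k,\boldsymbol s)}+\lambda_{i+1}^{(k,\boldsymbol s)}\neq0$. BAE associated to $\boldsymbol s,\boldsymbol z,\boldsymbol\lambda,\boldsymbol l$ ($l_0=l_{m+n}=0$), in variables $t^{(i)}_j$, $1\le i\le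 m+n-1$, $1\le j\le l_i$: \[\prod_{k=1}^p\frac{t_j^{(i)}-z_k+s_i\lambda_i^{(k,\boldsymbol s)}h}{t_j^{(i)}-z_k+s_{i+1}\lambda_{i+1}^{(k,\boldsymbol s)}h}\prod_{r=1}^{l_{i-1}}\frac{t_j^{(i)}-t_r^{(i-1)}+s_ih}{t_j^{(i)}-t_r^{(i-1)}}\prod_{r\ne j}\frac{t_j^{(i)}-t_r^{(i)}-s_ih}{t_j^{(i)}-t_r^{(i)}+s_{i+1}h}\prod_{r=1}^{l_{i+1}}\frac{t_j^{(i)}-t_r^{(i+1)}}{t_j^{(i)}-t_r^{(i+1)}-s_{i+1}h}=1,\] after cancelling the $k$-th first factor when $s_i\lambda_i^{(k,\boldsymbol s)}=s_{i+1}\lambda_{i+1}^{(k,\boldsymbol s)}$ and the third product when $s_i=-s_{i+1}$, with remaining denominators nonzero; if $s_i\ne s_{i+1}$, a root of multiplicity $r$ of the (j-independent) equation for $t^{(i)}_j$ with other colors fixed may occur among the $t^{(i)}_j$ at most $r$ times. $\boldsymbol y=(y_1,\dots,y_{m+n-1})$, $y_i=\prod_j(x-t^{(i)}_j)$, represents $\boldsymbol t$; $y_0=y_{m+n}=1$; polynomials are taken up to nonzero scalars. $\boldsymbol y$ is generic w.r.t. $\boldsymbol s,\boldsymbol\lambda,\boldsymbol z$ if for each $i$: (1) if $s_i=s_{i+1}$, $y_i$ has simple roots and no common root with $y_i[1]$; (2) $y_i$ has no common root with $y_{i-1},y_{i-1}[-s_i],y_{i+1}[s_{i+1}]$; (3)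 roots of $y_i$ are not roots of $T_i^{\boldsymbol s}(T_{i+1}^{\boldsymbol s})^{-s_is_{i+1}}$. Reproduction and population: let $\boldsymbol y$ be generic w.r.t. $\boldsymbol s,\boldsymbol\lambda,\boldsymbol z$ and represent a BAE solution. If $s_i=s_{i+1}$ (bosonic reproduction in direction $i$), $(\boldsymbol y,\boldsymbol s)$ may be replaced by $(\boldsymbol y^{[i]},\boldsymbol s)$ for any nonzero polynomial $\tilde y_i$ with $\mathrm{Wr}^{s_i}(y_i,\tilde y_i)=T_i^{\boldsymbol s}(T_{i+1}^{\boldsymbol s})^{-1}y_{i-1}[-s_i]y_{i+1}$, where $\boldsymbol y^{[i]}$ is $\boldsymbol y$ with $y_i$ replaced by $\tilde y_i$. If $s_i\neq s_{i+1}$ and $\varphi_i^{\boldsymbol s}y_{i-1}[-s_i]y_{i+1}\ne\psi_i^{\boldsymbol s}y_{i-1}y_{i+1}[-s_i]$ (fermionic reproduction), $(\boldsymbol y,\boldsymbol s)$ is replaced by $(\boldsymbol y^{[i]},\boldsymbol s^{[i]})$ where $\tilde y_i$ is the polynomial with $y_i\tilde y_i[-s_i]=\varphi_i^{\boldsymbol s}y_{i-1}[-s_i]y_{i+1}-\psi_i^{\boldsymbol s}y_{i-1}y_{i+1}[-s_i]$. Reproductions are applied again to resulting pairs that are generic (w.r.t. their parity sequence). The population $P_{(\boldsymbol y,\boldsymbol s)}$ is the closure in $(\mathbb{P}(\mathbb{C}[x]))^{m+n-1}\times S_{m|n}$ of the set of all pairs obtained from $(\boldsymbol y,\boldsymbol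 s)$ by finitely many reproductions. For a pair $(\boldsymbol y,\boldsymbol s)$, \[\mathcal R^{\boldsymbol s}(\boldsymbol y)=\prod_{i=1}^{m+n}\Big(1-\frac{T_i^{\boldsymbol s}\,y_{i-1}[-s_i]\,y_i[s_i]}{T_i^{\boldsymbol s}[s_i]\,y_{i-1}\,y_i}\,\tau\Big)^{s_i}\in\mathbb{K}(\tau),\] the product ordered with $i$ increasing from left to right. *)

theory Defs
  imports "HOL-Computational_Algebra.Computational_Algebra"
begin

text \<open>
  Indices: parity sequences s are functions nat => int, entries s 1, ..., s (m+n), each in {1,-1},
  and s i = 0 outside {1..m+n}.  Weights mu :: nat => int with entries mu 1, ..., mu (m+n).
  The p points z and weights lam are indexed by k < p.
  Tuples y :: nat => complex poly with y 1, ..., y (m+n-1) nonzero, and y i = 1 for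
  i = 0 and i >= m+n (so y_0 = y_{m+n} = 1).
  The field K = C(x) is the type  complex poly fract.
\<close>

text \<open>On K, f[c] is the unique g with g = a[c]/b[c] for every representation f = a/b
  (well defined since p \<mapsto> p[c] is a ring automorphism of C[x]).\<close>

definition pshift :: "complex \<Rightarrow> int \<Rightarrow> complex poly \<Rightarrow> complex poly" where
  "pshift h c f = pcompose f [:- (of_int c * h), 1:]"

definition fshift :: "complex \<Rightarrow> int \<Rightarrow> complex poly fract \<Rightarrow> complex poly fract" where
  "fshift h c f = (SOME g. \<forall>a b. b \<noteq> 0 \<longrightarrow> f = Fract a b \<longrightarrow> g = Fract (pshift h c a) (pshift h c b))"

definition parseqs :: "nat \<Rightarrow> nat \<Rightarrow> (nat \<Rightarrow> int) set" where
  "parseqs m n = {s. (\<forall>i. (1 \<le> i \<and> i \<le> m + n \<longrightarrow> s i \<in> {1, -1}) \<and>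
                           (\<not> (1 \<le> i \<and> i \<le> m + n) \<longrightarrow> s i = 0))
                     \<and> card {i \<in> {1..m+n}. s i = 1} = m}"

definition std_parseq :: "nat \<Rightarrow> nat \<Rightarrow> nat \<Rightarrow> int" where
  "std_parseq m n i = (if 1 \<le> i \<and> i \<le> m then 1 else if m < i \<and> i \<le> m + n then -1 else 0)"

definition swap_at :: "nat \<Rightarrow> (nat \<Rightarrow> 'a) \<Rightarrow> nat \<Rightarrow> 'a" where
  "swap_at i s = s(i := s (i+1), i+1 := s i)"

definition polyweight :: "nat \<Rightarrow> nat \<Rightarrow> (nat \<Rightarrow> int) \<Rightarrow> bool" where
  "polyweight m n mu \<longleftrightarrow>
     (\<forall>i. 1 \<le> i \<and> i \<le> m + n \<longrightarrow> mu i \<ge> 0) \<and>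
     (\<forall>i. 1 \<le> i \<and> i < m \<longrightarrow> mu i \<ge> mu (i+1)) \<and>
     (\<forall>i. m + 1 \<le> i \<and> i < m + n \<longrightarrow> mu i \<ge> mu (i+1)) \<and>
     (m > 0 \<longrightarrow> (\<forall>k. 1 \<le> k \<and> k \<le> n \<and> int k > mu m \<longrightarrow> mu (m + k) = 0))"

text \<open>Odd reflection in direction i (s_i \<noteq> s_(i+1)): for the odd simple root
  alpha = e_sigma(i) - e_sigma(i+1), (lambda, alpha) = s_i (lambda_i + lambda_(i+1));
  the new highest weight is lambda - alpha if this is nonzero and lambda otherwise,
  written in the coordinates of the swapped parity sequence.\<close>
definition oddrefl :: "nat \<Rightarrow> (nat \<Rightarrow> int) \<Rightarrow> nat \<Rightarrow> int" where
  "oddrefl i mu = (if mu i + mu (i+1) \<noteq> 0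
                   then mu(i := mu (i+1) + 1, i+1 := mu i - 1)
                   else mu(i := mu (i+1), i+1 := mu i))"

inductive hwrel :: "nat \<Rightarrow> nat \<Rightarrow> (nat \<Rightarrow> int) \<Rightarrow> (nat \<Rightarrow> int) \<Rightarrow> (nat \<Rightarrow> int) \<Rightarrow> bool"
  for m n mu where
  std: "hwrel m n mu (std_parseq m n) mu"
| refl_odd: "hwrel m n mu s nu \<Longrightarrow> 1 \<le> i \<Longrightarrow> i < m + n \<Longrightarrow> s i \<noteq> s (i+1) \<Longrightarrow>
             hwrel m n mu (swap_at i s) (oddrefl i nu)"

definition lamS :: "nat \<Rightarrow> nat \<Rightarrow> (nat \<Rightarrow> int) \<Rightarrow> (nat \<Rightarrow> int) \<Rightarrow> nat \<Rightarrow> int" where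
  "lamS m n mu s = (THE nu. hwrel m n mu s nu)"

definition linf :: "complex \<Rightarrow> complex poly" where
  "linf c = [:c, 1:]"

definition Tpol :: "complex \<Rightarrow> nat \<Rightarrow> nat \<Rightarrow> nat \<Rightarrow> (nat \<Rightarrow> complex) \<Rightarrow> (nat \<Rightarrow> nat \<Rightarrow> int)
                    \<Rightarrow> (nat \<Rightarrow> int) \<Rightarrow> nat \<Rightarrow> complex poly" where
  "Tpol h m n p z lam s i =
     (\<Prod>k<p. \<Prod>j\<in>{1..lamS m n (lam k) s i}. linf (- z k + of_int (s i) * of_int j * h))"

definition phipol :: "complex \<Rightarrow> nat \<Rightarrow> nat \<Rightarrow> nat \<Rightarrow> (nat \<Rightarrow> complex) \<Rightarrow> (nat \<Rightarrow> nat \<Rightarrow> int)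
                    \<Rightarrow> (nat \<Rightarrow> int) \<Rightarrow> nat \<Rightarrow> complex poly" where
  "phipol h m n p z lam s i =
     (\<Prod>k\<in>{k. k < p \<and> lamS m n (lam k) s i + lamS m n (lam k) s (i+1) \<noteq> 0}.
        linf (- z k + of_int (s i) * of_int (lamS m n (lam k) s i) * h))"

definition psipol :: "complex \<Rightarrow> nat \<Rightarrow> nat \<Rightarrow> nat \<Rightarrow> (nat \<Rightarrow> complex) \<Rightarrow> (nat \<Rightarrow> nat \<Rightarrow> int)
                    \<Rightarrow> (nat \<Rightarrow> int) \<Rightarrow> nat \<Rightarrow> complex poly" where
  "psipol h m n p z lam s i =
     (\<Prod>k\<in>{k. k < p \<and> lamS m n (lam k) s i + lamS m n (lam k) s (i+1) \<noteq> 0}.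
        linf (- z k + of_int (s (i+1)) * of_int (lamS m n (lam k) s (i+1)) * h))"

definition hgeneric :: "complex \<Rightarrow> nat \<Rightarrow> (nat \<Rightarrow> complex) \<Rightarrow> bool" where
  "hgeneric h p z \<longleftrightarrow> (\<forall>i<p. \<forall>j<p. i \<noteq> j \<longrightarrow> (\<forall>c::int. z i - z j \<noteq> of_int c * h))"

text \<open>tt i is the multiset {t^(i)_1, ..., t^(i)_(l_i)}; tt 0 = tt (m+n) = {#}.
  For a root t = t^(i)_j, the third product runs over tt i minus one copy of t (r \<noteq> j).\<close>

definition bae_cancel :: "nat \<Rightarrow> nat \<Rightarrow> (nat \<Rightarrow> nat \<Rightarrow> int) \<Rightarrow> (nat \<Rightarrow> int) \<Rightarrow> nat \<Rightarrow> nat \<Rightarrow> bool" where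
  "bae_cancel m n lam s i k \<longleftrightarrow>
     s i * lamS m n (lam k) s i = s (i+1) * lamS m n (lam k) s (i+1)"

definition bae_eq :: "complex \<Rightarrow> nat \<Rightarrow> nat \<Rightarrow> nat \<Rightarrow> (nat \<Rightarrow> complex) \<Rightarrow> (nat \<Rightarrow> nat \<Rightarrow> int)
     \<Rightarrow> (nat \<Rightarrow> int) \<Rightarrow> (nat \<Rightarrow> complex multiset) \<Rightarrow> nat \<Rightarrow> complex \<Rightarrow> bool" where
  "bae_eq h m n p z lam s tt i t \<longleftrightarrow>
     (let si = of_int (s i); si1 = of_int (s (i+1));
          K = {k. k < p \<and> \<not> bae_cancel m n lam s i k};
          num1 = (\<lambda>k. t - z k + si * of_int (lamS m n (lam k) s i) * h);
          den1 = (\<lambda>k. t - z k + si1 * of_int (lamS m n (lam k) s (i+1)) * h);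
          bos = (s i = s (i+1))
      in (\<forall>k\<in>K. den1 k \<noteq> 0)
       \<and> (\<forall>r\<in>#tt (i-1). t - r \<noteq> 0)
       \<and> (bos \<longrightarrow> (\<forall>r\<in># tt i - {#t#}. t - r + si1 * h \<noteq> 0))
       \<and> (\<forall>r\<in>#tt (i+1). t - r - si1 * h \<noteq> 0)
       \<and> (\<Prod>k\<in>K. num1 k / den1 k)
         * (\<Prod>r\<in>#tt (i-1). (t - r + si * h) / (t - r))
         * (if bos then (\<Prod>r\<in># tt i - {#t#}. (t - r - si * h) / (t - r + si1 * h)) else 1)
         * (\<Prod>r\<in>#tt (i+1). (t - r) / (t - r - si1 * h)) = 1)"

text \<open>For s_i \<noteq> s_(i+1) the (j-independent) equation, cleared of denominators, reads
  bae_poly(t) = 0; a root of multiplicity r may occur at most r times among the t^(i)_j.\<close>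
definition bae_poly :: "complex \<Rightarrow> nat \<Rightarrow> nat \<Rightarrow> nat \<Rightarrow> (nat \<Rightarrow> complex) \<Rightarrow> (nat \<Rightarrow> nat \<Rightarrow> int)
     \<Rightarrow> (nat \<Rightarrow> int) \<Rightarrow> (nat \<Rightarrow> complex multiset) \<Rightarrow> nat \<Rightarrow> complex poly" where
  "bae_poly h m n p z lam s tt i =
     (let si = of_int (s i); si1 = of_int (s (i+1));
          K = {k. k < p \<and> \<not> bae_cancel m n lam s i k}
      in (\<Prod>k\<in>K. linf (- z k + si * of_int (lamS m n (lam k) s i) * h))
           * (\<Prod>r\<in>#tt (i-1). linf (si * h - r)) * (\<Prod>r\<in>#tt (i+1). linf (- r))
       - (\<Prod>k\<in>K. linf (- z k + si1 * of_int (lamS m n (lam k) s (i+1)) * h))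
           * (\<Prod>r\<in>#tt (i-1). linf (- r)) * (\<Prod>r\<in>#tt (i+1). linf (- r - si1 * h)))"

definition bae_solution :: "complex \<Rightarrow> nat \<Rightarrow> nat \<Rightarrow> nat \<Rightarrow> (nat \<Rightarrow> complex) \<Rightarrow> (nat \<Rightarrow> nat \<Rightarrow> int)
     \<Rightarrow> (nat \<Rightarrow> int) \<Rightarrow> (nat \<Rightarrow> complex multiset) \<Rightarrow> bool" where
  "bae_solution h m n p z lam s tt \<longleftrightarrow>
     tt 0 = {#} \<and> tt (m+n) = {#} \<and>
     (\<forall>i. 1 \<le> i \<and> i < m + n \<longrightarrow>
        (\<forall>t\<in>#tt i. bae_eq h m n p z lam s tt i t) \<and>
        (s i \<noteq> s (i+1) \<longrightarrow> bae_poly h m n p z lam s tt i \<noteq> 0 \<longrightarrow>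
           (\<forall>t. count (tt i) t \<le> order t (bae_poly h m n p z lam s tt i))))"

definition represents_bae :: "complex \<Rightarrow> nat \<Rightarrow> nat \<Rightarrow> nat \<Rightarrow> (nat \<Rightarrow> complex) \<Rightarrow> (nat \<Rightarrow> nat \<Rightarrow> int)
     \<Rightarrow> (nat \<Rightarrow> int) \<Rightarrow> (nat \<Rightarrow> complex poly) \<Rightarrow> bool" where
  "represents_bae h m n p z lam s y \<longleftrightarrow>
     (\<exists>tt. bae_solution h m n p z lam s tt \<and>
        (\<forall>i. 1 \<le> i \<and> i < m + n \<longrightarrow> (\<exists>c. c \<noteq> 0 \<and> y i = smult c (\<Prod>t\<in>#tt i. linf (- t)))))"

definition valid_tuple :: "nat \<Rightarrow> nat \<Rightarrow> (nat \<Rightarrow> complex poly) \<Rightarrow> bool" where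
  "valid_tuple m n y \<longleftrightarrow> (\<forall>i. (i = 0 \<or> m + n \<le> i) \<longrightarrow> y i = 1) \<and> (\<forall>i. 1 \<le> i \<and> i < m + n \<longrightarrow> y i \<noteq> 0)"

text \<open>Roots of the rational function T_i (T_(i+1))^(-s_i s_(i+1)).\<close>
definition Troot :: "complex \<Rightarrow> nat \<Rightarrow> nat \<Rightarrow> nat \<Rightarrow> (nat \<Rightarrow> complex) \<Rightarrow> (nat \<Rightarrow> nat \<Rightarrow> int)
     \<Rightarrow> (nat \<Rightarrow> int) \<Rightarrow> nat \<Rightarrow> complex \<Rightarrow> bool" where
  "Troot h m n p z lam s i t \<longleftrightarrow>
     (if s i * s (i+1) = 1
      then order t (Tpol h m n p z lam s i) > order t (Tpol h m n p z lam s (i+1))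
      else poly (Tpol h m n p z lam s i) t = 0 \<or> poly (Tpol h m n p z lam s (i+1)) t = 0)"

definition generic :: "complex \<Rightarrow> nat \<Rightarrow> nat \<Rightarrow> nat \<Rightarrow> (nat \<Rightarrow> complex) \<Rightarrow> (nat \<Rightarrow> nat \<Rightarrow> int)
     \<Rightarrow> (nat \<Rightarrow> int) \<Rightarrow> (nat \<Rightarrow> complex poly) \<Rightarrow> bool" where
  "generic h m n p z lam s y \<longleftrightarrow>
     (\<forall>i. 1 \<le> i \<and> i < m + n \<longrightarrow>
        (s i = s (i+1) \<longrightarrow> rsquarefree (y i) \<and>
            (\<forall>t. poly (y i) t = 0 \<longrightarrow> poly (pshift h 1 (y i)) t \<noteq> 0)) \<and>
        (\<forall>t. poly (y i) t = 0 \<longrightarrow>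
            poly (y (i-1)) t \<noteq> 0 \<and> poly (pshift h (- s i) (y (i-1))) t \<noteq> 0 \<and>
            poly (pshift h (s (i+1)) (y (i+1))) t \<noteq> 0) \<and>
        (\<forall>t. poly (y i) t = 0 \<longrightarrow> \<not> Troot h m n p z lam s i t))"

definition Wr :: "complex \<Rightarrow> int \<Rightarrow> complex poly \<Rightarrow> complex poly \<Rightarrow> complex poly" where
  "Wr h e g1 g2 = g1 * pshift h (- e) g2 - g2 * pshift h (- e) g1"

text \<open>One reproduction step (polynomials up to nonzero scalars).  The bosonic equation
  Wr = T_i T_(i+1)^(-1) y_(i-1)[-s_i] y_(i+1) is multiplied by the nonzero T_(i+1).\<close>
definition repro_step :: "complex \<Rightarrow> nat \<Rightarrow> nat \<Rightarrow> nat \<Rightarrow> (nat \<Rightarrow> complex) \<Rightarrow> (nat \<Rightarrow> nat \<Rightarrow> int)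
     \<Rightarrow> ((nat \<Rightarrow> complex poly) \<times> (nat \<Rightarrow> int)) \<Rightarrow> ((nat \<Rightarrow> complex poly) \<times> (nat \<Rightarrow> int)) \<Rightarrow> bool" where
  "repro_step h m n p z lam a b \<longleftrightarrow>
     (case a of (y, s) \<Rightarrow>
       generic h m n p z lam s y \<and>
       (\<exists>i yt. 1 \<le> i \<and> i < m + n \<and> yt \<noteq> 0 \<and>
         ((s i = s (i+1) \<and> b = (y(i := yt), s) \<and>
           (\<exists>c. c \<noteq> 0 \<and> Wr h (s i) (y i) yt * Tpol h m n p z lam s (i+1) =
              smult c (Tpol h m n p z lam s i * pshift h (- s i) (y (i-1)) * y (i+1))))
        \<or>
          (s i \<noteq> s (i+1) \<and> b = (y(i := yt), swap_at i s) \<and>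
           phipol h m n p z lam s i * pshift h (- s i) (y (i-1)) * y (i+1)
             \<noteq> psipol h m n p z lam s i * y (i-1) * pshift h (- s i) (y (i+1)) \<and>
           (\<exists>c. c \<noteq> 0 \<and> y i * pshift h (- s i) yt =
              smult c (phipol h m n p z lam s i * pshift h (- s i) (y (i-1)) * y (i+1)
                 - psipol h m n p z lam s i * y (i-1) * pshift h (- s i) (y (i+1))))))))"

text \<open>Closedness in (P(C[x]))^(m+n-1) x S_(m|n): the topology is the inductive limit of the
  (compact, metrizable) spaces P(C[x]_{\<le> d})^(m+n-1) x S_(m|n); a set is closed iff each
  piece is sequentially closed; projective convergence = convergence of suitable representatives.\<close>
definition pop_closed :: "nat \<Rightarrow> nat \<Rightarrow> ((nat \<Rightarrow> complex poly) \<times> (nat \<Rightarrow> int)) set \<Rightarrow> bool" where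
  "pop_closed m n C \<longleftrightarrow>
     (\<forall>d s (u :: nat \<Rightarrow> nat \<Rightarrow> complex poly) v.
        (\<forall>k. (u k, s) \<in> C) \<and> (\<forall>k i. 1 \<le> i \<and> i < m + n \<longrightarrow> degree (u k i) \<le> d) \<and>
        valid_tuple m n v \<and>
        (\<forall>i j. 1 \<le> i \<and> i < m + n \<longrightarrow> (\<lambda>k. coeff (u k i) j) \<longlonglongrightarrow> coeff (v i) j)
        \<longrightarrow> (v, s) \<in> C)"

definition population :: "complex \<Rightarrow> nat \<Rightarrow> nat \<Rightarrow> nat \<Rightarrow> (nat \<Rightarrow> complex) \<Rightarrow> (nat \<Rightarrow> nat \<Rightarrow> int)
     \<Rightarrow> (nat \<Rightarrow> complex poly) \<Rightarrow> (nat \<Rightarrow> int) \<Rightarrow> ((nat \<Rightarrow> complex poly) \<times> (nat \<Rightarrow> int)) set" where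
  "population h m n p z lam y s =
     \<Inter>{C. {b. (repro_step h m n p z lam)\<^sup>*\<^sup>* (y, s) b} \<subseteq> C \<and> pop_closed m n C}"

text \<open>K(tau) is embedded in the division ring K((tau)) of skew Laurent series
  (tau f = f[1] tau); all elements needed here lie in the skew power series ring K[[tau]],
  represented by coefficient sequences a with  sum_j a_j tau^j.\<close>
type_synonym dop = "nat \<Rightarrow> complex poly fract"

definition dop_one :: dop where "dop_one = (\<lambda>k. if k = 0 then 1 else 0)"

definition dop_mult :: "complex \<Rightarrow> dop \<Rightarrow> dop \<Rightarrow> dop" where
  "dop_mult h A B = (\<lambda>k. \<Sum>j\<le>k. A j * fshift h (int j) (B (k - j)))"

definition dop_lin :: "complex poly fract \<Rightarrow> dop" where
  "dop_lin a = (\<lambda>k. if k = 0 then 1 else if k = 1 then - a else 0)"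

text \<open>(1 - a tau)^(-1) = sum_k a a[1] ... a[k-1] tau^k\<close>
definition dop_lin_inv :: "complex \<Rightarrow> complex poly fract \<Rightarrow> dop" where
  "dop_lin_inv h a = (\<lambda>k. \<Prod>i<k. fshift h (int i) a)"

definition dop_factor :: "complex \<Rightarrow> int \<Rightarrow> complex poly fract \<Rightarrow> dop" where
  "dop_factor h e a = (if e = 1 then dop_lin a else dop_lin_inv h a)"

definition Rcoef :: "complex \<Rightarrow> nat \<Rightarrow> nat \<Rightarrow> nat \<Rightarrow> (nat \<Rightarrow> complex) \<Rightarrow> (nat \<Rightarrow> nat \<Rightarrow> int)
     \<Rightarrow> (nat \<Rightarrow> int) \<Rightarrow> (nat \<Rightarrow> complex poly) \<Rightarrow> nat \<Rightarrow> complex poly fract" where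
  "Rcoef h m n p z lam s y i =
     Fract (Tpol h m n p z lam s i * pshift h (- s i) (y (i-1)) * pshift h (s i) (y i))
           (pshift h (s i) (Tpol h m n p z lam s i) * y (i-1) * y i)"

text \<open>R^s(y) = prod_{i=1}^{m+n} (1 - Rcoef_i tau)^{s_i}, i increasing from left to right\<close>
definition Rop :: "complex \<Rightarrow> nat \<Rightarrow> nat \<Rightarrow> nat \<Rightarrow> (nat \<Rightarrow> complex) \<Rightarrow> (nat \<Rightarrow> nat \<Rightarrow> int)
     \<Rightarrow> (nat \<Rightarrow> int) \<Rightarrow> (nat \<Rightarrow> complex poly) \<Rightarrow> dop" where
  "Rop h m n p z lam s y =
     foldl (\<lambda>acc i. dop_mult h acc (dop_factor h (s i) (Rcoef h m n p z lam s y i)))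
           dop_one [1..<m+n+1]"

end

theory Submission
  imports Defs
begin

text \<open>\<open>\<R>\<^sup>s(y)\<close> is a product of factors \<open>(1 - a\<^sub>i \<tau>)\<^sup>\<plusminus>\<^sup>1\<close>, and a reproduction in direction
  \<open>i\<close> only affects the factors \<open>i\<close> and \<open>i + 1\<close>.  Since \<open>(1 - a\<tau>)(1 - b\<tau>) = 1 - (a + b)\<tau> + a b[1]\<tau>\<^sup>2\<close>,
  such a pair is determined by \<open>a + b\<close> and \<open>a b[1]\<close>.  Writing \<open>a\<^sub>i\<close> as a product of ratios
  \<open>x[\<plusminus>1]/x\<close> of \<open>T\<^sub>i\<close>, \<open>y\<^sub>i\<^sub>-\<^sub>1\<close> and \<open>y\<^sub>i\<close>, the polynomial \<open>y\<^sub>i\<close> drops out of \<open>a\<^sub>i a\<^sub>i\<^sub>+\<^sub>1[1]\<close>, while the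
  sum \<open>a\<^sub>i + a\<^sub>i\<^sub>+\<^sub>1\<close> is preserved by the Wronskian equation of a bosonic reproduction.  In a
  fermionic direction the ratios of \<open>T\<close>'s for \<open>s\<close> and \<open>s\<^sup>[\<^sup>i\<^sup>]\<close> are all quotients of \<open>\<phi>\<^sub>i\<close>, \<open>\<psi>\<^sub>i\<close>
  and their shifts, the reproduction equation gives \<open>a\<^sub>i + a\<^sub>i' = a\<^sub>i\<^sub>+\<^sub>1 + a\<^sub>i\<^sub>+\<^sub>1'\<close>, and moving the
  inverted factor to the other side of the resulting identity of pairs swaps the parities.
  So \<open>\<R>\<close> is constant along reproductions, and the level sets of \<open>\<R>\<close> are closed because
  the coefficients of \<open>\<R>\<^sup>s(y)\<close> are rational in the coefficients of \<open>y\<close>, with denominators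
  that do not vanish on tuples of nonzero polynomials.\<close>

section \<open>Shifts\<close>

lemma pshift_0 [simp]: "pshift h c 0 = 0"
  by (simp add: pshift_def)

lemma pshift_1 [simp]: "pshift h c 1 = 1"
  by (simp add: pshift_def pcompose_1)

lemma pshift_const [simp]: "pshift h c [:a:] = [:a:]"
  by (simp add: pshift_def)

lemma pshift_add: "pshift h c (p + q) = pshift h c p + pshift h c q"
  by (simp add: pshift_def pcompose_add)

lemma pshift_mult: "pshift h c (p * q) = pshift h c p * pshift h c q"
  by (simp add: pshift_def pcompose_mult)

lemma pshift_smult: "pshift h c (smult a p) = smult a (pshift h c p)"
  by (simp add: pshift_def pcompose_smult)

lemma pshift_sum: "pshift h c (sum f A) = (\<Sum>i\<in>A. pshift h c (f i))"
  by (simp add: pshift_def pcompose_sum)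

lemma pshift_prod: "pshift h c (prod f A) = (\<Prod>i\<in>A. pshift h c (f i))"
  by (simp add: pshift_def pcompose_prod)

lemma pshift_0_shift [simp]: "pshift h 0 f = f"
  by (simp add: pshift_def)

lemma pshift_pshift [simp]: "pshift h c (pshift h d f) = pshift h (c + d) f"
proof -
  have "[:- (of_int d * h), 1:] \<circ>\<^sub>p [:- (of_int c * h), 1:] = [:- (of_int (c + d) * h), 1:]"
    by (simp add: pcompose_pCons algebra_simps)
  then show ?thesis
    unfolding pshift_def by (metis pcompose_assoc)
qed

lemma pshift_eq_0_iff [simp]: "pshift h c f = 0 \<longleftrightarrow> f = 0"
  unfolding pshift_def by (rule pcompose_eq_0_iff) simp

lemma degree_pshift [simp]: "degree (pshift h c f) = degree f"
  by (simp add: pshift_def degree_pcompose)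

lemma pshift_linf: "pshift h c (linf a) = linf (a - of_int c * h)"
  by (simp add: pshift_def linf_def pcompose_pCons algebra_simps)

lemma fshift_Fract:
  assumes "b \<noteq> 0"
  shows "fshift h c (Fract a b) = Fract (pshift h c a) (pshift h c b)"
proof -
  let ?P = "\<lambda>g. \<forall>a' b'. b' \<noteq> 0 \<longrightarrow> Fract a b = Fract a' b' \<longrightarrow>
                  g = Fract (pshift h c a') (pshift h c b')"
  have "?P (Fract (pshift h c a) (pshift h c b))"
  proof (intro allI impI)
    fix a' b' :: "complex poly"
    assume "b' \<noteq> 0" "Fract a b = Fract a' b'"
    with assms have "pshift h c (a * b') = pshift h c (a' * b)"
      by (simp add: eq_fract)
    with assms \<open>b' \<noteq> 0\<close> show "Fract (pshift h c a) (pshift h c b) = Fract (pshift h c a') (pshift h c b')"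
      by (simp add: eq_fract pshift_mult)
  qed
  then have "?P (fshift h c (Fract a b))"
    unfolding fshift_def by (rule someI)
  with assms show ?thesis
    by blast
qed

lemma fshift_to_fract [simp]: "fshift h c (to_fract a) = to_fract (pshift h c a)"
  by (simp add: to_fract_def fshift_Fract)

lemma fshift_mult [simp]: "fshift h c (x * y) = fshift h c x * fshift h c y"
  by (cases x, cases y) (simp add: fshift_Fract pshift_mult)

lemma fshift_add [simp]: "fshift h c (x + y) = fshift h c x + fshift h c y"
  by (cases x, cases y) (simp add: fshift_Fract pshift_mult pshift_add)

lemma fshift_uminus [simp]: "fshift h c (- x) = - fshift h c x"
  by (cases x) (simp add: fshift_Fract pshift_def pcompose_uminus)

lemma fshift_diff [simp]: "fshift h c (x - y) = fshift h c x - fshift h c y"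
  by (metis diff_conv_add_uminus fshift_add fshift_uminus)

lemma fshift_1 [simp]: "fshift h c 1 = 1"
  by (metis fshift_to_fract pshift_1 to_fract_1)

lemma fshift_0 [simp]: "fshift h c 0 = 0"
  by (metis fshift_to_fract pshift_eq_0_iff to_fract_0)

lemma fshift_inverse [simp]: "fshift h c (inverse x) = inverse (fshift h c x)"
proof (cases x)
  case (Fract a b)
  then show ?thesis
    by (cases "a = 0") (auto simp add: fshift_Fract eq_fract)
qed

lemma fshift_divide [simp]: "fshift h c (x / y) = fshift h c x / fshift h c y"
  by (simp add: divide_inverse)

lemma fshift_fshift [simp]: "fshift h c (fshift h d x) = fshift h (c + d) x"
  by (cases x) (simp add: fshift_Fract)

lemma fshift_0_shift [simp]: "fshift h 0 x = x"
  by (cases x) (simp add: fshift_Fract)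

lemma fshift_eq_0_iff [simp]: "fshift h c x = 0 \<longleftrightarrow> x = 0"
  by (metis add.right_inverse fshift_0 fshift_0_shift fshift_fshift)

lemma fshift_sum: "fshift h c (sum f A) = (\<Sum>i\<in>A. fshift h c (f i))"
  by (induction A rule: infinite_finite_induct) auto

lemma fshift_prod: "fshift h c (prod f A) = (\<Prod>i\<in>A. fshift h c (f i))"
  by (induction A rule: infinite_finite_induct) auto

lemma to_fract_smult: "to_fract (smult c p) = to_fract [:c:] * to_fract p"
  by (metis mult.left_neutral mult_smult_left smult_one to_fract_mult)

section \<open>Skew power series in the shift operator\<close>

lemma sum_atMost_eq_single:
  assumes "j0 \<le> (k::nat)" "\<And>j. j \<le> k \<Longrightarrow> j \<noteq> j0 \<Longrightarrow> f j = 0"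
  shows "(\<Sum>j\<le>k. f j) = f j0"
  using assms by (subst sum.remove[of _ j0]) (auto intro: sum.neutral)

lemma dop_mult_one_left [simp]: "dop_mult h dop_one A = A"
proof
  fix k
  show "dop_mult h dop_one A k = A k"
    unfolding dop_mult_def by (subst sum_atMost_eq_single[of 0]) (auto simp: dop_one_def)
qed

lemma dop_mult_one_right [simp]: "dop_mult h A dop_one = A"
proof
  fix k
  show "dop_mult h A dop_one k = A k"
    unfolding dop_mult_def by (subst sum_atMost_eq_single[of k]) (auto simp: dop_one_def)
qed

lemma dop_mult_assoc: "dop_mult h (dop_mult h A B) C = dop_mult h A (dop_mult h B C)"
proof
  fix k
  define f where "f i r t = A i * fshift h (int i) (B r) * fshift h (int (i + r)) (C t)" for i r t
  have "dop_mult h (dop_mult h A B) C k = (\<Sum>j\<le>k. \<Sum>i\<le>j. f i (j - i) (k - j))"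
    unfolding dop_mult_def sum_distrib_right f_def by (intro sum.cong) simp_all
  also have "\<dots> = (\<Sum>j\<le>k. \<Sum>i\<le>k - j. f j i (k - j - i))"
    using fps_mult_assoc_lemma[where k = k and n = k and f = f] by (simp add: atLeast0AtMost)
  also have "\<dots> = dop_mult h A (dop_mult h B C) k"
    unfolding dop_mult_def sum_distrib_left f_def fshift_sum
    by (intro sum.cong) (simp_all add: mult.assoc add.commute)
  finally show "dop_mult h (dop_mult h A B) C k = dop_mult h A (dop_mult h B C) k" .
qed

lemma dop_lin_mult_inv: "dop_mult h (dop_lin a) (dop_lin_inv h a) = dop_one"
proof
  fix k
  show "dop_mult h (dop_lin a) (dop_lin_inv h a) k = dop_one k"
  proof (cases k)
    case (Suc k')
    have "dop_mult h (dop_lin a) (dop_lin_inv h a) k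
        = (\<Sum>j\<in>{0, 1}. dop_lin a j * fshift h (int j) (dop_lin_inv h a (k - j)))"
      unfolding dop_mult_def using Suc by (intro sum.mono_neutral_right) (auto simp: dop_lin_def)
    also have "\<dots> = dop_lin_inv h a (Suc k') - a * fshift h 1 (dop_lin_inv h a k')"
      using Suc by (simp add: dop_lin_def)
    also have "\<dots> = 0"
      unfolding dop_lin_inv_def fshift_prod prod.lessThan_Suc_shift by (simp add: add.commute)
    finally show ?thesis
      using Suc by (simp add: dop_one_def)
  qed (simp add: dop_mult_def dop_lin_def dop_lin_inv_def dop_one_def)
qed

lemma dop_inv_mult_lin: "dop_mult h (dop_lin_inv h a) (dop_lin a) = dop_one"
proof
  fix k
  show "dop_mult h (dop_lin_inv h a) (dop_lin a) k = dop_one k"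
  proof (cases k)
    case (Suc k')
    have "dop_mult h (dop_lin_inv h a) (dop_lin a) k
        = (\<Sum>j\<in>{k', k}. dop_lin_inv h a j * fshift h (int j) (dop_lin a (k - j)))"
      unfolding dop_mult_def using Suc by (intro sum.mono_neutral_right) (auto simp: dop_lin_def)
    also have "\<dots> = dop_lin_inv h a (Suc k') - dop_lin_inv h a k' * fshift h (int k') a"
      using Suc by (simp add: dop_lin_def)
    also have "\<dots> = 0"
      unfolding dop_lin_inv_def by simp
    finally show ?thesis
      using Suc by (simp add: dop_one_def)
  qed (simp add: dop_mult_def dop_lin_def dop_lin_inv_def dop_one_def)
qed

lemma dop_mult_lin_lin:
  "dop_mult h (dop_lin a) (dop_lin b) =
     (\<lambda>k. if k = 0 then 1 else if k = 1 then - (a + b) else if k = 2 then a * fshift h 1 b else 0)"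
proof
  fix k
  have "dop_mult h (dop_lin a) (dop_lin b) k
      = (\<Sum>j\<in>{0, 1} \<inter> {..k}. dop_lin a j * fshift h (int j) (dop_lin b (k - j)))"
    unfolding dop_mult_def by (intro sum.mono_neutral_right) (auto simp: dop_lin_def)
  also have "\<dots> = (if k = 0 then 1 else if k = 1 then - (a + b) else if k = 2 then a * fshift h 1 b else 0)"
  proof (cases "k = 0")
    case False
    then have "{0, 1} \<inter> {..k} = {0, 1}"
      by auto
    with False show ?thesis
      by (simp add: dop_lin_def) presburger
  qed (simp add: dop_lin_def)
  finally show "dop_mult h (dop_lin a) (dop_lin b) k =
      (if k = 0 then 1 else if k = 1 then - (a + b) else if k = 2 then a * fshift h 1 b else 0)" .
qed

lemma dop_mult_lin_lin_eqI:
  assumes "a + b = a' + b'" "a * fshift h 1 b = a' * fshift h 1 b'"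
  shows "dop_mult h (dop_lin a) (dop_lin b) = dop_mult h (dop_lin a') (dop_lin b')"
  unfolding dop_mult_lin_lin assms ..

lemma dop_inv_mult_inv_eq:
  assumes "dop_mult h (dop_lin p1) (dop_lin p2) = dop_mult h (dop_lin q1) (dop_lin q2)"
  shows "dop_mult h (dop_lin_inv h p2) (dop_lin_inv h p1) = dop_mult h (dop_lin_inv h q2) (dop_lin_inv h q1)"
proof -
  let ?m = "dop_mult h"
  have swap: "?m (dop_lin p1) (?m (dop_lin p2) X) = ?m (dop_lin q1) (?m (dop_lin q2) X)" for X
    by (metis assms dop_mult_assoc)
  have "?m (dop_lin_inv h p2) (dop_lin_inv h p1)
      = ?m (?m (dop_lin_inv h q2) (?m (?m (dop_lin_inv h q1) (dop_lin q1)) (dop_lin q2)))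
           (?m (dop_lin_inv h p2) (dop_lin_inv h p1))"
    by (simp add: dop_inv_mult_lin)
  also have "\<dots> = ?m (?m (dop_lin_inv h q2) (dop_lin_inv h q1))
                      (?m (dop_lin p1) (?m (?m (dop_lin p2) (dop_lin_inv h p2)) (dop_lin_inv h p1)))"
    by (simp only: dop_mult_assoc swap)
  also have "\<dots> = ?m (dop_lin_inv h q2) (dop_lin_inv h q1)"
    by (simp add: dop_lin_mult_inv)
  finally show ?thesis .
qed

lemma dop_lin_mult_inv_eq:
  assumes "dop_mult h (dop_lin p1) (dop_lin p2) = dop_mult h (dop_lin q1) (dop_lin q2)"
  shows "dop_mult h (dop_lin p2) (dop_lin_inv h q2) = dop_mult h (dop_lin_inv h p1) (dop_lin q1)"
proof -
  let ?m = "dop_mult h"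
  have swap: "?m (dop_lin p1) (?m (dop_lin p2) X) = ?m (dop_lin q1) (?m (dop_lin q2) X)" for X
    by (metis assms dop_mult_assoc)
  have "?m (dop_lin_inv h p1) (dop_lin q1)
      = ?m (dop_lin_inv h p1) (?m (?m (dop_lin q1) (dop_lin q2)) (dop_lin_inv h q2))"
    by (simp add: dop_mult_assoc dop_lin_mult_inv)
  also have "\<dots> = ?m (?m (dop_lin_inv h p1) (dop_lin p1)) (?m (dop_lin p2) (dop_lin_inv h q2))"
    by (simp only: dop_mult_assoc swap)
  also have "\<dots> = ?m (dop_lin p2) (dop_lin_inv h q2)"
    by (simp add: dop_inv_mult_lin)
  finally show ?thesis ..
qed

lemma dop_inv_mult_lin_eq:
  assumes "dop_mult h (dop_lin p1) (dop_lin p2) = dop_mult h (dop_lin q1) (dop_lin q2)"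
  shows "dop_mult h (dop_lin_inv h q1) (dop_lin p1) = dop_mult h (dop_lin q2) (dop_lin_inv h p2)"
proof -
  let ?m = "dop_mult h"
  have swap: "?m (dop_lin p1) (?m (dop_lin p2) X) = ?m (dop_lin q1) (?m (dop_lin q2) X)" for X
    by (metis assms dop_mult_assoc)
  have "?m (dop_lin_inv h q1) (dop_lin p1)
      = ?m (dop_lin_inv h q1) (?m (?m (dop_lin p1) (dop_lin p2)) (dop_lin_inv h p2))"
    by (simp add: dop_mult_assoc dop_lin_mult_inv)
  also have "\<dots> = ?m (?m (dop_lin_inv h q1) (dop_lin q1)) (?m (dop_lin q2) (dop_lin_inv h p2))"
    by (simp only: dop_mult_assoc swap)
  also have "\<dots> = ?m (dop_lin q2) (dop_lin_inv h p2)"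
    by (simp add: dop_inv_mult_lin)
  finally show ?thesis .
qed

lemma dop_factor_pair_bosonic:
  assumes "e = 1 \<or> e = -1" "a + b = a' + b'"
    and "e = 1 \<Longrightarrow> a * fshift h 1 b = a' * fshift h 1 b'"
    and "e = -1 \<Longrightarrow> b * fshift h 1 a = b' * fshift h 1 a'"
  shows "dop_mult h (dop_factor h e a') (dop_factor h e b') = dop_mult h (dop_factor h e a) (dop_factor h e b)"
  using assms(1)
proof
  assume "e = 1"
  with assms(2,3) have "dop_mult h (dop_lin a') (dop_lin b') = dop_mult h (dop_lin a) (dop_lin b)"
    by (intro dop_mult_lin_lin_eqI) simp_all
  with \<open>e = 1\<close> show ?thesis
    by (simp add: dop_factor_def)
next
  assume "e = -1"
  with assms(2,4) have "dop_mult h (dop_lin b) (dop_lin a) = dop_mult h (dop_lin b') (dop_lin a')"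
    by (intro dop_mult_lin_lin_eqI) (simp_all add: add.commute)
  then have "dop_mult h (dop_lin_inv h a) (dop_lin_inv h b) = dop_mult h (dop_lin_inv h a') (dop_lin_inv h b')"
    by (rule dop_inv_mult_inv_eq)
  with \<open>e = -1\<close> show ?thesis
    by (simp add: dop_factor_def)
qed

lemma dop_factor_pair_fermionic:
  assumes "e = 1 \<or> e = -1" "a + a' = b + b'"
    and "e = 1 \<Longrightarrow> a' * fshift h 1 a = b' * fshift h 1 b"
    and "e = -1 \<Longrightarrow> b * fshift h 1 b' = a * fshift h 1 a'"
  shows "dop_mult h (dop_factor h (- e) a') (dop_factor h e b') =
         dop_mult h (dop_factor h e a) (dop_factor h (- e) b)"
  using assms(1)
proof
  assume "e = 1"
  with assms(2,3) have "dop_mult h (dop_lin a') (dop_lin a) = dop_mult h (dop_lin b') (dop_lin b)"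
    by (intro dop_mult_lin_lin_eqI) (simp_all add: add.commute)
  then have "dop_mult h (dop_lin a) (dop_lin_inv h b) = dop_mult h (dop_lin_inv h a') (dop_lin b')"
    by (rule dop_lin_mult_inv_eq)
  with \<open>e = 1\<close> show ?thesis
    by (simp add: dop_factor_def)
next
  assume "e = -1"
  with assms(2,4) have "dop_mult h (dop_lin b) (dop_lin b') = dop_mult h (dop_lin a) (dop_lin a')"
    by (intro dop_mult_lin_lin_eqI) (simp_all add: add.commute)
  then have "dop_mult h (dop_lin_inv h a) (dop_lin b) = dop_mult h (dop_lin a') (dop_lin_inv h b')"
    by (rule dop_inv_mult_lin_eq)
  with \<open>e = -1\<close> show ?thesis
    by (simp add: dop_factor_def)
qed

section \<open>Parity sequences and the weights \<open>\<lambda>\<^sup>s\<close>\<close>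

fun parity_count :: "int \<Rightarrow> (nat \<Rightarrow> int) \<Rightarrow> nat \<Rightarrow> nat" where
  "parity_count v s 0 = 0"
| "parity_count v s (Suc j) = parity_count v s j + (if s (Suc j) = v then 1 else 0)"

lemma parity_count_eq_card: "parity_count v s j = card {k \<in> {1..j}. s k = v}"
proof (induction j)
  case (Suc j)
  have "{k \<in> {1..Suc j}. s k = v} = {k \<in> {1..j}. s k = v} \<union> (if s (Suc j) = v then {Suc j} else {})"
    by (auto simp: le_Suc_eq)
  with Suc show ?case
    by (auto simp: card_insert_if)
qed simp

lemma parity_count_mono: "i \<le> j \<Longrightarrow> parity_count v s i \<le> parity_count v s j"
proof (induction j)
  case (Suc j)
  then show ?case
    by (cases "i = Suc j") auto
qed simp

lemma parity_count_cong:
  assumes "\<And>k. j0 < k \<Longrightarrow> k \<le> j \<Longrightarrow> s' k = s k" "parity_count v s' j0 = parity_count v s j0" "j0 \<le> j"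
  shows "parity_count v s' j = parity_count v s j"
  using assms
proof (induction j)
  case (Suc j)
  then show ?case
    by (cases "j0 = Suc j") auto
qed simp

lemma parity_count_add:
  "(\<And>k. 1 \<le> k \<Longrightarrow> k \<le> j \<Longrightarrow> s k = 1 \<or> s k = -1) \<Longrightarrow> parity_count 1 s j + parity_count (-1) s j = j"
  by (induction j) auto

lemma swap_at_simps:
  "swap_at i s i = s (i + 1)" "swap_at i s (i + 1) = s i" "swap_at i s (Suc i) = s i"
  "k \<noteq> i \<Longrightarrow> k \<noteq> i + 1 \<Longrightarrow> swap_at i s k = s k"
  by (auto simp: swap_at_def)

lemma swap_at_swap_at [simp]: "swap_at i (swap_at i s) = s"
  by (auto simp: swap_at_def)

lemma parity_count_swap_at_less: "j < i \<Longrightarrow> parity_count v (swap_at i s) j = parity_count v s j"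
  by (rule parity_count_cong[of 0]) (auto simp: swap_at_def)

lemma parity_count_swap_at_self:
  "1 \<le> i \<Longrightarrow> parity_count v (swap_at i s) i = parity_count v s (i - 1) + (if s (i + 1) = v then 1 else 0)"
  using parity_count_swap_at_less[of "i - 1" i v s] by (cases i) (auto simp: swap_at_def)

lemma parity_count_swap_at_ge:
  assumes "1 \<le> i" "i + 1 \<le> j"
  shows "parity_count v (swap_at i s) j = parity_count v s j"
proof (rule parity_count_cong[of "i + 1"])
  show "parity_count v (swap_at i s) (i + 1) = parity_count v s (i + 1)"
    using assms(1) parity_count_swap_at_less[of "i - 1" i v s] by (cases i) (auto simp: swap_at_def)
qed (use assms in \<open>auto simp: swap_at_def\<close>)

lemma parity_count_swap_at_neq:
  "1 \<le> i \<Longrightarrow> j \<noteq> i \<Longrightarrow> parity_count v (swap_at i s) j = parity_count v s j"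
  using parity_count_swap_at_less parity_count_swap_at_ge by (cases "j < i") auto

lemma parseqs_entry: "s \<in> parseqs m n \<Longrightarrow> 1 \<le> i \<Longrightarrow> i \<le> m + n \<Longrightarrow> s i = 1 \<or> s i = -1"
  by (auto simp: parseqs_def)

lemma parseqs_outside: "s \<in> parseqs m n \<Longrightarrow> \<not> (1 \<le> i \<and> i \<le> m + n) \<Longrightarrow> s i = 0"
  by (auto simp: parseqs_def)

lemma parseqs_neq_next:
  assumes "s \<in> parseqs m n" "1 \<le> i" "i < m + n" "s i \<noteq> s (i + 1)"
  shows "s (i + 1) = - s i"
proof -
  have "s i = 1 \<or> s i = -1" "s (i + 1) = 1 \<or> s (i + 1) = -1"
    using parseqs_entry[OF assms(1)] assms(2,3) by simp_all
  with assms(4) show ?thesis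
    by auto
qed

lemma parity_count_pos_parseqs: "s \<in> parseqs m n \<Longrightarrow> parity_count 1 s (m + n) = m"
  by (auto simp: parseqs_def parity_count_eq_card)

lemma parity_count_neg_parseqs: "s \<in> parseqs m n \<Longrightarrow> parity_count (-1) s (m + n) = n"
  using parity_count_add[of "m + n" s] parity_count_pos_parseqs[of s m n] parseqs_entry[of s m n] by force

lemma swap_at_parseqs:
  assumes "s \<in> parseqs m n" "1 \<le> i" "i < m + n"
  shows "swap_at i s \<in> parseqs m n"
proof -
  have "parity_count 1 (swap_at i s) (m + n) = m"
    using assms parity_count_swap_at_ge[of i "m + n" 1 s] parity_count_pos_parseqs by simp
  moreover have "\<forall>k. (1 \<le> k \<and> k \<le> m + n \<longrightarrow> swap_at i s k \<in> {1, -1}) \<and>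
                 (\<not> (1 \<le> k \<and> k \<le> m + n) \<longrightarrow> swap_at i s k = 0)"
    using assms by (auto simp: swap_at_def parseqs_def)
  ultimately show ?thesis
    by (simp add: parseqs_def parity_count_eq_card)
qed

lemma std_parseq_parseqs: "std_parseq m n \<in> parseqs m n"
proof -
  have "{i \<in> {1..m + n}. std_parseq m n i = 1} = {1..m}"
    by (auto simp: std_parseq_def)
  then show ?thesis
    by (auto simp: parseqs_def std_parseq_def)
qed

lemma parity_count_std_parseq:
  "j \<le> m + n \<Longrightarrow> parity_count 1 (std_parseq m n) j = min j m \<and> parity_count (-1) (std_parseq m n) j = j - m"
  by (induction j) (auto simp: std_parseq_def)

lemma parseqs_no_ascent_antimono:
  assumes s: "s \<in> parseqs m n"
    and no_ascent: "\<And>i. 1 \<le> i \<Longrightarrow> i < m + n \<Longrightarrow> \<not> (s i = -1 \<and> s (i + 1) = 1)"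
    and "s j = -1" "1 \<le> j" "j \<le> k" "k \<le> m + n"
  shows "s k = -1"
  using assms(5,6)
proof (induction k)
  case (Suc k)
  show ?case
  proof (cases "j = Suc k")
    case False
    with Suc assms(4) have "s k = -1" "1 \<le> k"
      by auto
    with Suc no_ascent[of k] parseqs_entry[OF s, of "Suc k"] show ?thesis
      by auto
  qed (use assms in simp)
qed (use assms in simp)

lemma parseqs_no_ascent_eq_std_parseq:
  assumes s: "s \<in> parseqs m n"
    and no_ascent: "\<And>i. 1 \<le> i \<Longrightarrow> i < m + n \<Longrightarrow> \<not> (s i = -1 \<and> s (i + 1) = 1)"
  shows "s = std_parseq m n"
proof
  fix j
  let ?P = "{k \<in> {1..m + n}. s k = 1}"
  have card: "card ?P = m"
    using s by (simp add: parseqs_def)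
  have antimono: "s k = -1" if "s i = -1" "1 \<le> i" "i \<le> k" "k \<le> m + n" for i k
    using parseqs_no_ascent_antimono[OF s _ that] no_ascent by blast
  show "s j = std_parseq m n j"
  proof (cases "1 \<le> j \<and> j \<le> m + n")
    case j: True
    show ?thesis
    proof (cases "j \<le> m")
      case True
      have "s j = 1"
      proof (rule ccontr)
        assume "s j \<noteq> 1"
        with j parseqs_entry[OF s] have "s j = -1"
          by blast
        have "?P \<subseteq> {1..j - 1}"
        proof
          fix k
          assume "k \<in> ?P"
          with antimono[OF \<open>s j = -1\<close>, of k] j show "k \<in> {1..j - 1}"
            by fastforce
        qed
        then have "card ?P \<le> j - 1"
          using card_mono[of "{1..j - 1}"] by fastforce
        with card True j show False
          by simp
      qed
      with True j show ?thesis
        by (simp add: std_parseq_def)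
    next
      case False
      have "s j = -1"
      proof (rule ccontr)
        assume "s j \<noteq> -1"
        with j parseqs_entry[OF s] have "s j = 1"
          by blast
        have "{1..j} \<subseteq> ?P"
        proof
          fix k
          assume k: "k \<in> {1..j}"
          with antimono[of k j] j \<open>s j = 1\<close> have "s k \<noteq> -1"
            by auto
          with parseqs_entry[OF s, of k] k j show "k \<in> ?P"
            by auto
        qed
        then have "j \<le> card ?P"
          using card_mono[of _ "{1..j}"] by fastforce
        with card False show False
          by simp
      qed
      with False j show ?thesis
        by (simp add: std_parseq_def)
    qed
  qed (use parseqs_outside[OF s] in \<open>auto simp: std_parseq_def\<close>)
qed

text \<open>The weights \<open>\<lambda>\<^sup>s\<close> are read off the \<open>(m|n)\<close>-hook diagram of \<open>\<lambda>\<close>, whose rows are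
  \<open>\<lambda>\<^sub>1, \<dots>, \<lambda>\<^sub>m\<close> and whose \<open>c\<close>-th column has length \<open>hook_col m \<lambda> c\<close>.  If \<open>r\<close> and \<open>c\<close>
  count the entries \<open>1\<close> and \<open>-1\<close> of \<open>s\<close> up to position \<open>i\<close>, then \<open>\<lambda>\<^sup>s\<^sub>i\<close> is the part of
  row \<open>r\<close> to the right of column \<open>c\<close> if \<open>s\<^sub>i = 1\<close>, and the part of column \<open>c\<close> below
  row \<open>r\<close> if \<open>s\<^sub>i = -1\<close>.\<close>

definition hook_col :: "nat \<Rightarrow> (nat \<Rightarrow> int) \<Rightarrow> nat \<Rightarrow> int" where
  "hook_col m mu c = int (card {r \<in> {1..m}. mu r \<ge> int c}) + mu (m + c)"

definition hook_weight :: "nat \<Rightarrow> nat \<Rightarrow> (nat \<Rightarrow> int) \<Rightarrow> (nat \<Rightarrow> int) \<Rightarrow> nat \<Rightarrow> int" where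
  "hook_weight m n mu s i =
     (if 1 \<le> i \<and> i \<le> m + n then
        (if s i = 1 then max (mu (parity_count 1 s i) - int (parity_count (-1) s i)) 0
         else max (hook_col m mu (parity_count (-1) s i) - int (parity_count 1 s i)) 0)
      else mu i)"

lemma polyweight_antimono:
  assumes "polyweight m n mu" "1 \<le> a" "a \<le> b" "b \<le> m"
  shows "mu b \<le> mu a"
  using assms(3,4)
proof (induction b)
  case (Suc b)
  show ?case
  proof (cases "a = Suc b")
    case False
    with Suc assms(2) have "mu b \<le> mu a" "1 \<le> b" "b < m"
      by auto
    moreover from assms(1) \<open>1 \<le> b\<close> \<open>b < m\<close> have "mu (b + 1) \<le> mu b"
      unfolding polyweight_def by blast
    ultimately show ?thesis
      by simp
  qed simp
qed simp

lemma polyweight_box_iff: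
  assumes pw: "polyweight m n mu" and r: "1 \<le> r" "r \<le> m" and c: "c + 1 \<le> n"
  shows "mu r \<ge> int c + 1 \<longleftrightarrow> hook_col m mu (c + 1) \<ge> int r"
proof
  let ?R = "{r' \<in> {1..m}. mu r' \<ge> int (c + 1)}"
  assume row: "mu r \<ge> int c + 1"
  have "{1..r} \<subseteq> ?R"
    using polyweight_antimono[OF pw] row r by fastforce
  then have "r \<le> card ?R"
    using card_mono[of ?R "{1..r}"] by simp
  moreover have "mu (m + (c + 1)) \<ge> 0"
    using pw c unfolding polyweight_def by auto
  ultimately show "hook_col m mu (c + 1) \<ge> int r"
    unfolding hook_col_def by linarith
next
  let ?R = "{r' \<in> {1..m}. mu r' \<ge> int (c + 1)}"
  assume col: "hook_col m mu (c + 1) \<ge> int r"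
  show "mu r \<ge> int c + 1"
  proof (rule ccontr)
    assume short: "\<not> mu r \<ge> int c + 1"
    have "mu m \<le> mu r"
      using polyweight_antimono[OF pw] r by simp
    with pw c r short have "mu (m + (c + 1)) = 0"
      unfolding polyweight_def by auto
    moreover have "?R \<subseteq> {1..r - 1}"
    proof
      fix x
      assume x: "x \<in> ?R"
      with polyweight_antimono[OF pw, of r x] r short have "x < r"
        by fastforce
      with x show "x \<in> {1..r - 1}"
        by auto
    qed
    then have "card ?R \<le> r - 1"
      using card_mono[of "{1..r - 1}"] by fastforce
    ultimately show False
      using col r unfolding hook_col_def by linarith
  qed
qed

lemma oddrefl_oddrefl [simp]: "oddrefl i (oddrefl i nu) = nu"
  by (auto simp: oddrefl_def fun_eq_iff)

lemma hook_weight_swap_at_pos: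
  assumes pw: "polyweight m n mu" and s: "s \<in> parseqs m n" and i: "1 \<le> i" "i < m + n"
    and si: "s i = 1" "s (i + 1) = -1"
  shows "hook_weight m n mu (swap_at i s) = oddrefl i (hook_weight m n mu s)"
proof -
  let ?s' = "swap_at i s"
  define r where "r = parity_count 1 s i"
  define c where "c = parity_count (-1) s i"
  have prev: "parity_count 1 s (i - 1) + 1 = r" "parity_count (-1) s (i - 1) = c"
    using si i unfolding r_def c_def by (cases i; simp)+
  have next_s: "parity_count 1 s (i + 1) = r" "parity_count (-1) s (i + 1) = c + 1"
    using si unfolding r_def c_def by auto
  have at_i: "parity_count 1 ?s' i = r - 1" "parity_count (-1) ?s' i = c + 1"
    using parity_count_swap_at_self[OF i(1), of _ s] si prev by auto
  have at_next: "parity_count 1 ?s' (i + 1) = r" "parity_count (-1) ?s' (i + 1) = c + 1"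
    using parity_count_swap_at_ge[OF i(1), of "i + 1"] next_s by auto
  have r: "1 \<le> r" "r \<le> m"
    using prev parity_count_mono[of i "m + n" 1 s] parity_count_pos_parseqs[OF s] i
    unfolding r_def by auto
  have c: "c + 1 \<le> n"
    using parity_count_mono[of "i + 1" "m + n" "-1" s] parity_count_neg_parseqs[OF s] i next_s by simp
  have box: "mu r \<ge> int c + 1 \<longleftrightarrow> hook_col m mu (c + 1) \<ge> int r"
    by (rule polyweight_box_iff[OF pw r c])
  have "hook_weight m n mu s i = max (mu r - int c) 0"
    "hook_weight m n mu s (i + 1) = max (hook_col m mu (c + 1) - int r) 0"
    "hook_weight m n mu ?s' i = max (hook_col m mu (c + 1) - int (r - 1)) 0"
    "hook_weight m n mu ?s' (i + 1) = max (mu r - int (c + 1)) 0"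
    using i si next_s at_i at_next unfolding hook_weight_def r_def c_def
    by (simp_all add: swap_at_simps)
  moreover have "hook_weight m n mu ?s' j = hook_weight m n mu s j" if "j \<noteq> i" "j \<noteq> i + 1" for j
    using that parity_count_swap_at_neq[OF i(1)] unfolding hook_weight_def by (simp add: swap_at_simps)
  ultimately show ?thesis
    using box r by (cases "mu r \<ge> int c + 1") (auto simp: fun_eq_iff oddrefl_def)
qed

lemma hook_weight_swap_at:
  assumes pw: "polyweight m n mu" and s: "s \<in> parseqs m n" and i: "1 \<le> i" "i < m + n"
    and si: "s i \<noteq> s (i + 1)"
  shows "hook_weight m n mu (swap_at i s) = oddrefl i (hook_weight m n mu s)"
proof (cases "s i = 1")
  case True
  with si parseqs_entry[OF s, of "i + 1"] i show ?thesis
    using hook_weight_swap_at_pos[OF pw s i] by auto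
next
  case False
  with si parseqs_entry[OF s, of i] parseqs_entry[OF s, of "i + 1"] i
  have "hook_weight m n mu s = oddrefl i (hook_weight m n mu (swap_at i s))"
    using hook_weight_swap_at_pos[OF pw swap_at_parseqs[OF s i] i] by (auto simp: swap_at_simps)
  then show ?thesis
    by simp
qed

lemma hook_col_below_rows:
  assumes pw: "polyweight m n mu" and c: "1 \<le> c" "c \<le> n"
  shows "max (hook_col m mu c - int m) 0 = mu (m + c)"
proof -
  have nonneg: "mu (m + c) \<ge> 0"
    using pw c unfolding polyweight_def by auto
  have "card {r \<in> {1..m}. mu r \<ge> int c} \<le> card {1..m}"
    by (rule card_mono) auto
  then have rows: "card {r \<in> {1..m}. mu r \<ge> int c} \<le> m"
    by simp
  show ?thesis
  proof (cases "mu (m + c) > 0 \<and> m > 0")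
    case True
    with pw c have "int c \<le> mu m"
      unfolding polyweight_def by (metis less_irrefl not_le)
    then have "{r \<in> {1..m}. mu r \<ge> int c} = {1..m}"
      using polyweight_antimono[OF pw] by fastforce
    then show ?thesis
      using nonneg unfolding hook_col_def by simp
  qed (use nonneg rows in \<open>auto simp: hook_col_def\<close>)
qed

lemma hook_weight_std_parseq:
  assumes pw: "polyweight m n mu"
  shows "hook_weight m n mu (std_parseq m n) = mu"
proof
  fix i
  show "hook_weight m n mu (std_parseq m n) i = mu i"
  proof (cases "1 \<le> i \<and> i \<le> m + n")
    case True
    have "mu i \<ge> 0"
      using pw True unfolding polyweight_def by auto
    moreover have "max (hook_col m mu (i - m) - int m) 0 = mu i" if "m < i"
      using hook_col_below_rows[OF pw, of "i - m"] that True by simp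
    ultimately show ?thesis
      using True parity_count_std_parseq[of i m n] by (auto simp: hook_weight_def std_parseq_def)
  qed (auto simp: hook_weight_def)
qed

lemma hwrel_imp_hook_weight:
  assumes pw: "polyweight m n mu"
  shows "hwrel m n mu s nu \<Longrightarrow> s \<in> parseqs m n \<and> nu = hook_weight m n mu s"
proof (induction rule: hwrel.induct)
  case std
  then show ?case
    using std_parseq_parseqs hook_weight_std_parseq[OF pw] by simp
next
  case (refl_odd s nu i)
  then show ?case
    using swap_at_parseqs hook_weight_swap_at[OF pw] by auto
qed

definition unsortedness :: "nat \<Rightarrow> nat \<Rightarrow> (nat \<Rightarrow> int) \<Rightarrow> nat" where
  "unsortedness m n s = (m + n) * (m + n) - (\<Sum>j\<in>{1..m + n}. parity_count 1 s j)"

lemma unsortedness_swap_at_ascent: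
  assumes s: "s \<in> parseqs m n" and i: "1 \<le> i" "i < m + n" and si: "s i = -1" "s (i + 1) = 1"
  shows "unsortedness m n (swap_at i s) < unsortedness m n s"
proof -
  let ?s' = "swap_at i s"
  have "(\<Sum>j\<in>{1..m + n}. parity_count 1 ?s' j)
          = parity_count 1 ?s' i + (\<Sum>j\<in>{1..m + n} - {i}. parity_count 1 ?s' j)"
    "(\<Sum>j\<in>{1..m + n}. parity_count 1 s j)
          = parity_count 1 s i + (\<Sum>j\<in>{1..m + n} - {i}. parity_count 1 s j)"
    using i by (simp_all add: sum.remove)
  moreover have "(\<Sum>j\<in>{1..m + n} - {i}. parity_count 1 ?s' j)
      = (\<Sum>j\<in>{1..m + n} - {i}. parity_count 1 s j)"
    using parity_count_swap_at_neq[OF i(1)] by (intro sum.cong) auto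
  moreover have "parity_count 1 ?s' i = parity_count 1 s i + 1"
    using parity_count_swap_at_self[OF i(1), of 1 s] si i by (cases i) auto
  moreover have "(\<Sum>j\<in>{1..m + n}. parity_count 1 ?s' j) \<le> (\<Sum>j\<in>{1..m + n}. m + n)"
    using parity_count_mono[of _ "m + n" 1 ?s'] parity_count_pos_parseqs[OF swap_at_parseqs[OF s i]]
    by (intro sum_mono) (simp add: trans_le_add1)
  ultimately show ?thesis
    unfolding unsortedness_def by simp
qed

lemma hwrel_hook_weight:
  assumes pw: "polyweight m n mu"
  shows "s \<in> parseqs m n \<Longrightarrow> hwrel m n mu s (hook_weight m n mu s)"
proof (induction "unsortedness m n s" arbitrary: s rule: less_induct)
  case less
  show ?case
  proof (cases "\<exists>i. 1 \<le> i \<and> i < m + n \<and> s i = -1 \<and> s (i + 1) = 1")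
    case False
    then have "s = std_parseq m n"
      using parseqs_no_ascent_eq_std_parseq[OF less.prems] by blast
    then show ?thesis
      using hwrel.std[of m n mu] hook_weight_std_parseq[OF pw] by simp
  next
    case True
    then obtain i where i: "1 \<le> i" "i < m + n" "s i = -1" "s (i + 1) = 1"
      by blast
    let ?s' = "swap_at i s"
    have "hwrel m n mu ?s' (hook_weight m n mu ?s')"
      using less.hyps[OF unsortedness_swap_at_ascent[OF less.prems i] swap_at_parseqs[OF less.prems i(1,2)]] .
    then have "hwrel m n mu (swap_at i ?s') (oddrefl i (hook_weight m n mu ?s'))"
      using hwrel.refl_odd[of m n mu ?s' _ i] i by (simp add: swap_at_simps)
    then show ?thesis
      using hook_weight_swap_at[OF pw less.prems i(1,2)] i by simp
  qed
qed

lemma lamS_eq_hook_weight: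
  assumes "polyweight m n mu" "s \<in> parseqs m n"
  shows "lamS m n mu s = hook_weight m n mu s"
  unfolding lamS_def
proof (rule the_equality)
  show "hwrel m n mu s (hook_weight m n mu s)"
    by (rule hwrel_hook_weight[OF assms])
qed (use hwrel_imp_hook_weight[OF assms(1)] in blast)

lemma lamS_nonneg:
  assumes "polyweight m n mu" "s \<in> parseqs m n" "1 \<le> i" "i \<le> m + n"
  shows "lamS m n mu s i \<ge> 0"
  using assms by (simp add: lamS_eq_hook_weight hook_weight_def)

lemma lamS_swap_at:
  assumes "polyweight m n mu" "s \<in> parseqs m n" "1 \<le> i" "i < m + n" "s i \<noteq> s (i + 1)"
  shows "lamS m n mu (swap_at i s) = oddrefl i (lamS m n mu s)"
  using assms by (simp add: lamS_eq_hook_weight swap_at_parseqs hook_weight_swap_at)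

section \<open>The coefficients of \<open>\<R>\<^sup>s(y)\<close>\<close>

definition fratio :: "complex \<Rightarrow> int \<Rightarrow> complex poly fract \<Rightarrow> complex poly fract" where
  "fratio h e x = fshift h e x / x"

lemma fratio_eq_0_iff [simp]: "fratio h e x = 0 \<longleftrightarrow> x = 0"
  by (simp add: fratio_def)

lemma fshift_fratio_uminus:
  "fshift h e (fratio h (- e) x) = inverse (fratio h e x)"
  "fshift h (- e) (fratio h e x) = inverse (fratio h (- e) x)"
  by (simp_all add: fratio_def)

lemma Rcoef_eq_fratio:
  "Rcoef h m n p z lam s y i =
     inverse (fratio h (s i) (to_fract (Tpol h m n p z lam s i)))
     * fratio h (- s i) (to_fract (y (i - 1))) * fratio h (s i) (to_fract (y i))"
  by (simp add: Rcoef_def Fract_conv_to_fract fratio_def field_simps)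

lemma valid_tuple_nonzero: "valid_tuple m n y \<Longrightarrow> y j \<noteq> 0"
  unfolding valid_tuple_def by (cases "j = 0 \<or> m + n \<le> j") auto

lemma linf_nonzero [simp]: "linf c \<noteq> 0"
  by (simp add: linf_def)

lemma Tpol_nonzero [simp]: "Tpol h m n p z lam s i \<noteq> 0"
  by (simp add: Tpol_def)

lemma linf_prod_telescope:
  fixes N :: nat
  shows "(\<Prod>j\<in>{1..int N}. linf (w + of_int e * of_int j * h)) * linf w =
     pshift h e (\<Prod>j\<in>{1..int N}. linf (w + of_int e * of_int j * h)) * linf (w + of_int e * of_int N * h)"
proof (induction N)
  case (Suc N)
  let ?f = "\<lambda>j::int. linf (w + of_int e * of_int j * h)"
  have "{1..int (Suc N)} = insert (int N + 1) {1..int N}"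
    by auto
  then have "prod ?f {1..int (Suc N)} = ?f (int N + 1) * prod ?f {1..int N}"
    by simp
  moreover have "pshift h e (?f (int N + 1)) = linf (w + of_int e * of_int N * h)"
    by (simp add: pshift_linf algebra_simps)
  ultimately show ?case
    using Suc by (simp add: pshift_mult algebra_simps)
qed simp

text \<open>Each \<open>k\<close> with \<open>\<lambda>\<^sub>j\<^sup>(\<^sup>k\<^sup>,\<^sup>s\<^sup>) \<noteq> 0\<close> contributes one linear factor to the numerator and one to
  the denominator of \<open>T\<^sub>j\<^sup>s/T\<^sub>j\<^sup>s[s\<^sub>j]\<close>; the other points of \<open>K\<close> add cancelling pairs.\<close>

lemma Tpol_fratio:
  assumes K: "K \<subseteq> {..<p}"
    and nonneg: "\<And>k. k \<in> K \<Longrightarrow> lamS m n (lam k) s j \<ge> 0"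
    and zero: "\<And>k. k < p \<Longrightarrow> k \<notin> K \<Longrightarrow> lamS m n (lam k) s j = 0"
  shows "inverse (fratio h (s j) (to_fract (Tpol h m n p z lam s j))) =
         to_fract (\<Prod>k\<in>K. linf (- z k + of_int (s j) * of_int (lamS m n (lam k) s j) * h))
         / to_fract (\<Prod>k\<in>K. linf (- z k))"
proof -
  let ?T = "\<lambda>k. \<Prod>j'\<in>{1..lamS m n (lam k) s j}. linf (- z k + of_int (s j) * of_int j' * h)"
  let ?N = "\<Prod>k\<in>K. linf (- z k + of_int (s j) * of_int (lamS m n (lam k) s j) * h)"
  have fin: "finite K"
    using K finite_subset by blast
  have T: "Tpol h m n p z lam s j = prod ?T K"
    unfolding Tpol_def using K zero by (intro prod.mono_neutral_right) auto
  have "?T k * linf (- z k) = pshift h (s j) (?T k) *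
          linf (- z k + of_int (s j) * of_int (lamS m n (lam k) s j) * h)" if "k \<in> K" for k
    using linf_prod_telescope[of "- z k" "s j" h "nat (lamS m n (lam k) s j)"] nonneg[OF that] by simp
  then have "prod ?T K * (\<Prod>k\<in>K. linf (- z k)) = pshift h (s j) (prod ?T K) * ?N"
    by (simp add: prod.distrib[symmetric] pshift_prod)
  then have "to_fract (prod ?T K) * to_fract (\<Prod>k\<in>K. linf (- z k)) =
      to_fract (pshift h (s j) (prod ?T K)) * to_fract ?N"
    by (simp only: to_fract_mult[symmetric])
  then show ?thesis
    using fin unfolding T fratio_def by (simp add: field_simps)
qed

section \<open>Reproductions preserve \<open>\<R>\<close>\<close>

lemma bosonic_coeff_sum:
  fixes A Y U C T T1 :: "complex poly fract"
  assumes nonzero: "A \<noteq> 0" "Y \<noteq> 0" "U \<noteq> 0" "C \<noteq> 0" "T \<noteq> 0" "T1 \<noteq> 0"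
    and W: "(Y * fshift h (- e) U - U * fshift h (- e) Y) * T1 = to_fract [:c:] * T * fshift h (- e) A * C"
  shows "inverse (fratio h e T) * fratio h (- e) A * fratio h e Y
           + inverse (fratio h e T1) * fratio h (- e) Y * fratio h e C
       = inverse (fratio h e T) * fratio h (- e) A * fratio h e U
           + inverse (fratio h e T1) * fratio h (- e) U * fratio h e C"
proof -
  let ?k = "to_fract [:c:]"
  have "fshift h e ((Y * fshift h (- e) U - U * fshift h (- e) Y) * T1) = fshift h e (?k * T * fshift h (- e) A * C)"
    using W by simp
  then have W': "(fshift h e Y * U - fshift h e U * Y) * fshift h e T1 = ?k * fshift h e T * A * fshift h e C"
    by simp
  have "fshift h e Y / Y - fshift h e U / U = (fshift h e Y * U - fshift h e U * Y) / (Y * U)"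
    using nonzero by (simp add: field_simps)
  also have "fshift h e Y * U - fshift h e U * Y = ?k * fshift h e T * A * fshift h e C / fshift h e T1"
    using nonzero W' by (simp add: eq_divide_eq)
  finally have D1: "fshift h e Y / Y - fshift h e U / U
      = ?k * fshift h e T * A * fshift h e C / (fshift h e T1 * Y * U)"
    by (simp add: mult.assoc)
  have "fshift h (- e) U / U - fshift h (- e) Y / Y = (Y * fshift h (- e) U - U * fshift h (- e) Y) / (Y * U)"
    using nonzero by (simp add: field_simps)
  also have "Y * fshift h (- e) U - U * fshift h (- e) Y = ?k * T * fshift h (- e) A * C / T1"
    using nonzero W by (simp add: eq_divide_eq)
  finally have D2: "fshift h (- e) U / U - fshift h (- e) Y / Y
      = ?k * T * fshift h (- e) A * C / (T1 * Y * U)"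
    by (simp add: mult.assoc)
  have "inverse (fratio h e T) * fratio h (- e) A * (fratio h e Y - fratio h e U)
      = inverse (fratio h e T1) * fratio h e C * (fratio h (- e) U - fratio h (- e) Y)"
    unfolding fratio_def D1 D2 using nonzero by (simp add: field_simps)
  then show ?thesis
    by (simp add: algebra_simps)
qed

lemma fermionic_coeff_sum:
  fixes A Y U C Z phi psi :: "complex poly fract"
  assumes nonzero: "A \<noteq> 0" "Y \<noteq> 0" "U \<noteq> 0" "C \<noteq> 0" "Z \<noteq> 0" "c \<noteq> 0"
    and W: "Y * fshift h (- e) U = to_fract [:c:] * (phi * fshift h (- e) A * C - psi * A * fshift h (- e) C)"
  shows "phi / Z * fratio h (- e) A * fratio h e Y + fshift h e psi / Z * fratio h e A * fratio h (- e) U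
       = psi / Z * fratio h e Y * fratio h (- e) C + fshift h e phi / Z * fratio h (- e) U * fratio h e C"
proof -
  let ?k = "to_fract [:c:]"
  have k: "?k \<noteq> 0"
    using nonzero by simp
  have "fshift h e (Y * fshift h (- e) U)
      = fshift h e (?k * (phi * fshift h (- e) A * C - psi * A * fshift h (- e) C))"
    using W by simp
  then have W': "fshift h e Y * U = ?k * (fshift h e phi * A * fshift h e C - fshift h e psi * fshift h e A * C)"
    by simp
  have "phi * fratio h (- e) A - psi * fratio h (- e) C
      = (phi * fshift h (- e) A * C - psi * A * fshift h (- e) C) / (A * C)"
    using nonzero unfolding fratio_def by (simp add: field_simps)
  also have "phi * fshift h (- e) A * C - psi * A * fshift h (- e) C = Y * fshift h (- e) U / ?k"
    using k W by (simp add: eq_divide_eq mult.commute)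
  finally have E1: "phi * fratio h (- e) A - psi * fratio h (- e) C = Y * fshift h (- e) U / (?k * A * C)"
    by (simp add: mult.assoc)
  have "fshift h e phi * fratio h e C - fshift h e psi * fratio h e A
      = (fshift h e phi * A * fshift h e C - fshift h e psi * fshift h e A * C) / (A * C)"
    using nonzero unfolding fratio_def by (simp add: field_simps)
  also have "fshift h e phi * A * fshift h e C - fshift h e psi * fshift h e A * C = fshift h e Y * U / ?k"
    using k W' by (simp add: eq_divide_eq mult.commute)
  finally have E2: "fshift h e phi * fratio h e C - fshift h e psi * fratio h e A = fshift h e Y * U / (?k * A * C)"
    by (simp add: mult.assoc)
  have "fratio h e Y / Z * (phi * fratio h (- e) A - psi * fratio h (- e) C)
      = fratio h (- e) U / Z * (fshift h e phi * fratio h e C - fshift h e psi * fratio h e A)"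
    unfolding E1 E2 using nonzero k unfolding fratio_def by (simp add: field_simps)
  then show ?thesis
    by (simp add: algebra_simps)
qed

lemma bosonic_coeff_prod:
  assumes "Y \<noteq> 0" "U \<noteq> 0"
  shows "(t * a * fratio h 1 Y) * fshift h 1 (t1 * fratio h (- 1) Y * c) =
         (t * a * fratio h 1 U) * fshift h 1 (t1 * fratio h (- 1) U * c)"
    and "(t1 * fratio h 1 Y * c) * fshift h 1 (t * a * fratio h (- 1) Y) =
         (t1 * fratio h 1 U * c) * fshift h 1 (t * a * fratio h (- 1) U)"
  using assms by (simp_all add: fshift_fratio_uminus)

lemma fermionic_coeff_prod:
  assumes "A \<noteq> 0" "C \<noteq> 0"
  shows "(fshift h 1 psi / Z * fratio h 1 A * fratio h (- 1) U)
           * fshift h 1 (phi / Z * fratio h (- 1) A * fratio h 1 Y) =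
         (fshift h 1 phi / Z * fratio h (- 1) U * fratio h 1 C)
           * fshift h 1 (psi / Z * fratio h 1 Y * fratio h (- 1) C)"
    and "(psi / Z * fratio h (- 1) Y * fratio h 1 C)
           * fshift h 1 (fshift h (- 1) phi / Z * fratio h 1 U * fratio h (- 1) C) =
         (phi / Z * fratio h 1 A * fratio h (- 1) Y)
           * fshift h 1 (fshift h (- 1) psi / Z * fratio h (- 1) A * fratio h 1 U)"
  using assms by (simp_all add: fshift_fratio_uminus)

lemma Rcoef_fun_upd_other:
  "j \<noteq> i \<Longrightarrow> j \<noteq> i + 1 \<Longrightarrow> Rcoef h m n p z lam s (y(i := u)) j = Rcoef h m n p z lam s y j"
  by (cases j) (simp_all add: Rcoef_def)

lemma Rop_local:
  assumes i: "1 \<le> i" "i < m + n"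
    and other: "\<And>j. 1 \<le> j \<Longrightarrow> j \<le> m + n \<Longrightarrow> j \<noteq> i \<Longrightarrow> j \<noteq> i + 1 \<Longrightarrow>
                  s' j = s j \<and> Rcoef h m n p z lam s' y' j = Rcoef h m n p z lam s y j"
    and pair: "dop_mult h (dop_factor h (s' i) (Rcoef h m n p z lam s' y' i))
                         (dop_factor h (s' (i + 1)) (Rcoef h m n p z lam s' y' (i + 1)))
             = dop_mult h (dop_factor h (s i) (Rcoef h m n p z lam s y i))
                         (dop_factor h (s (i + 1)) (Rcoef h m n p z lam s y (i + 1)))"
  shows "Rop h m n p z lam s' y' = Rop h m n p z lam s y"
proof -
  define g where "g s y acc j = dop_mult h acc (dop_factor h (s j) (Rcoef h m n p z lam s y j))" for s y acc j
  have split: "[1..<m + n + 1] = [1..<i] @ [i, i + 1] @ [i + 2..<m + n + 1]"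
    using i upt_add_eq_append[of 1 i "m + n + 1 - i"] by (simp add: upt_conv_Cons)
  have "foldl (g s' y') acc [1..<i] = foldl (g s y) acc [1..<i]"
    "foldl (g s' y') acc [i + 2..<m + n + 1] = foldl (g s y) acc [i + 2..<m + n + 1]" for acc
    using other i unfolding g_def by (intro foldl_cong; fastforce)+
  moreover have "foldl (g s' y') acc [i, i + 1] = foldl (g s y) acc [i, i + 1]" for acc
    using pair unfolding g_def by (simp add: dop_mult_assoc)
  ultimately show ?thesis
    unfolding Rop_def g_def[symmetric] split foldl_append by simp
qed

lemma Rop_bosonic_step:
  assumes y: "valid_tuple m n y" and i: "1 \<le> i" "i < m + n"
    and e: "s (i + 1) = s i" "s i = 1 \<or> s i = -1" and yt: "yt \<noteq> 0"
    and W: "Wr h (s i) (y i) yt * Tpol h m n p z lam s (i + 1) =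
              smult c (Tpol h m n p z lam s i * pshift h (- s i) (y (i - 1)) * y (i + 1))"
  shows "Rop h m n p z lam s (y(i := yt)) = Rop h m n p z lam s y"
proof (rule Rop_local[OF i])
  let ?y' = "y(i := yt)"
  define A Y U C where A_def: "A = to_fract (y (i - 1))" and Y_def: "Y = to_fract (y i)"
    and U_def: "U = to_fract yt" and C_def: "C = to_fract (y (i + 1))"
  define T T1 where T_def: "T = to_fract (Tpol h m n p z lam s i)"
    and T1_def: "T1 = to_fract (Tpol h m n p z lam s (i + 1))"
  define a b a' b' where a_def: "a = Rcoef h m n p z lam s y i" and b_def: "b = Rcoef h m n p z lam s y (i + 1)"
    and a'_def: "a' = Rcoef h m n p z lam s ?y' i" and b'_def: "b' = Rcoef h m n p z lam s ?y' (i + 1)"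
  have nonzero: "A \<noteq> 0" "Y \<noteq> 0" "U \<noteq> 0" "C \<noteq> 0" "T \<noteq> 0" "T1 \<noteq> 0"
    using valid_tuple_nonzero[OF y] yt unfolding A_def Y_def U_def C_def T_def T1_def by auto
  have coeffs: "a = inverse (fratio h (s i) T) * fratio h (- s i) A * fratio h (s i) Y"
    "b = inverse (fratio h (s i) T1) * fratio h (- s i) Y * fratio h (s i) C"
    "a' = inverse (fratio h (s i) T) * fratio h (- s i) A * fratio h (s i) U"
    "b' = inverse (fratio h (s i) T1) * fratio h (- s i) U * fratio h (s i) C"
    using i e unfolding a_def b_def a'_def b'_def A_def Y_def U_def C_def T_def T1_def Rcoef_eq_fratio
    by auto
  have "(Y * fshift h (- s i) U - U * fshift h (- s i) Y) * T1 = to_fract [:c:] * T * fshift h (- s i) A * C"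
    using arg_cong[OF W, of to_fract]
    unfolding Wr_def A_def Y_def U_def C_def T_def T1_def by (simp add: to_fract_smult mult_ac)
  then have sum: "a + b = a' + b'"
    unfolding coeffs by (rule bosonic_coeff_sum[OF nonzero])
  show "s j = s j \<and> Rcoef h m n p z lam s ?y' j = Rcoef h m n p z lam s y j"
    if "j \<noteq> i" "j \<noteq> i + 1" for j
    using that by (simp add: Rcoef_fun_upd_other)
  have "a * fshift h 1 b = a' * fshift h 1 b'" if "s i = 1"
    unfolding coeffs that by (rule bosonic_coeff_prod(1)[OF nonzero(2,3)])
  moreover have "b * fshift h 1 a = b' * fshift h 1 a'" if "s i = -1"
    unfolding coeffs that minus_minus by (rule bosonic_coeff_prod(2)[OF nonzero(2,3)])
  ultimately show "dop_mult h (dop_factor h (s i) a') (dop_factor h (s (i + 1)) b') =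
      dop_mult h (dop_factor h (s i) a) (dop_factor h (s (i + 1)) b)"
    unfolding e(1) by (rule dop_factor_pair_bosonic[OF e(2) sum])
qed

lemma lamS_swap_at_zero:
  assumes "polyweight m n mu" "s \<in> parseqs m n" "1 \<le> i" "i < m + n" "s i \<noteq> s (i + 1)"
    and "lamS m n mu s i + lamS m n mu s (i + 1) = 0"
  shows "lamS m n mu s i = 0" "lamS m n mu s (i + 1) = 0"
    "lamS m n mu (swap_at i s) i = 0" "lamS m n mu (swap_at i s) (i + 1) = 0"
  using assms lamS_nonneg[OF assms(1,2), of i] lamS_nonneg[OF assms(1,2), of "i + 1"]
  by (simp_all add: lamS_swap_at oddrefl_def)

lemma lamS_swap_at_nonzero:
  assumes "polyweight m n mu" "s \<in> parseqs m n" "1 \<le> i" "i < m + n" "s i \<noteq> s (i + 1)"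
    and "lamS m n mu s i + lamS m n mu s (i + 1) \<noteq> 0"
  shows "lamS m n mu (swap_at i s) i = lamS m n mu s (i + 1) + 1"
    "lamS m n mu (swap_at i s) (i + 1) = lamS m n mu s i - 1"
  using assms by (simp_all add: lamS_swap_at oddrefl_def)

lemma Tpol_swap_at_other:
  assumes "\<forall>k<p. polyweight m n (lam k)" "s \<in> parseqs m n" "1 \<le> i" "i < m + n" "s i \<noteq> s (i + 1)"
    and "j \<noteq> i" "j \<noteq> i + 1"
  shows "Tpol h m n p z lam (swap_at i s) j = Tpol h m n p z lam s j"
  unfolding Tpol_def using assms by (intro prod.cong) (simp_all add: lamS_swap_at oddrefl_def swap_at_simps)

lemma fermionic_Tpol_fratio:
  assumes pw: "\<forall>k<p. polyweight m n (lam k)" and s: "s \<in> parseqs m n"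
    and i: "1 \<le> i" "i < m + n" "s i \<noteq> s (i + 1)"
    and Z_def: "Z = to_fract (\<Prod>k | k < p \<and> lamS m n (lam k) s i + lamS m n (lam k) s (i + 1) \<noteq> 0. linf (- z k))"
  shows "inverse (fratio h (s i) (to_fract (Tpol h m n p z lam s i))) = to_fract (phipol h m n p z lam s i) / Z"
    and "inverse (fratio h (s (i + 1)) (to_fract (Tpol h m n p z lam s (i + 1)))) =
           to_fract (psipol h m n p z lam s i) / Z"
    and "inverse (fratio h (s (i + 1)) (to_fract (Tpol h m n p z lam (swap_at i s) i))) =
           fshift h (s i) (to_fract (psipol h m n p z lam s i)) / Z"
    and "inverse (fratio h (s i) (to_fract (Tpol h m n p z lam (swap_at i s) (i + 1)))) =
           fshift h (s i) (to_fract (phipol h m n p z lam s i)) / Z"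
proof -
  let ?s' = "swap_at i s"
  define K where "K = {k. k < p \<and> lamS m n (lam k) s i + lamS m n (lam k) s (i + 1) \<noteq> 0}"
  have K: "K \<subseteq> {..<p}"
    unfolding K_def by auto
  have nonneg: "lamS m n (lam k) s j \<ge> 0" "lamS m n (lam k) ?s' j \<ge> 0" if "k \<in> K" "j \<in> {i, i + 1}" for k j
    using that K i lamS_nonneg[OF _ s] lamS_nonneg[OF _ swap_at_parseqs[OF s i(1,2)]] pw by auto
  have zero: "lamS m n (lam k) s j = 0" "lamS m n (lam k) ?s' j = 0" if "k < p" "k \<notin> K" "j \<in> {i, i + 1}" for k j
    using that lamS_swap_at_zero[OF _ s i, of "lam k"] pw unfolding K_def by auto
  have shifted: "lamS m n (lam k) ?s' i = lamS m n (lam k) s (i + 1) + 1"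
    "lamS m n (lam k) ?s' (i + 1) = lamS m n (lam k) s i - 1" if "k \<in> K" for k
    using that lamS_swap_at_nonzero[OF _ s i, of "lam k"] pw unfolding K_def by auto
  have e: "s (i + 1) = - s i"
    by (rule parseqs_neq_next[OF s i])
  have Z: "Z = to_fract (\<Prod>k\<in>K. linf (- z k))"
    unfolding Z_def K_def ..
  have ratio: "inverse (fratio h (t j) (to_fract (Tpol h m n p z lam t j))) =
      to_fract (\<Prod>k\<in>K. linf (- z k + of_int (t j) * of_int (lamS m n (lam k) t j) * h)) / Z"
    if "t = s \<or> t = ?s'" "j = i \<or> j = i + 1" for t j
    unfolding Z using that nonneg zero by (intro Tpol_fratio[OF K]) auto
  show "inverse (fratio h (s i) (to_fract (Tpol h m n p z lam s i))) = to_fract (phipol h m n p z lam s i) / Z"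
    using ratio[of s i] unfolding phipol_def K_def[symmetric] by simp
  show "inverse (fratio h (s (i + 1)) (to_fract (Tpol h m n p z lam s (i + 1)))) =
      to_fract (psipol h m n p z lam s i) / Z"
    using ratio[of s "i + 1"] unfolding psipol_def K_def[symmetric] by simp
  have "(\<Prod>k\<in>K. linf (- z k + of_int (?s' i) * of_int (lamS m n (lam k) ?s' i) * h)) =
      pshift h (s i) (psipol h m n p z lam s i)"
    unfolding psipol_def K_def[symmetric] pshift_prod
    using e by (intro prod.cong) (auto simp: swap_at_simps shifted[simplified] pshift_linf algebra_simps)
  with ratio[of ?s' i] show "inverse (fratio h (s (i + 1)) (to_fract (Tpol h m n p z lam ?s' i))) =
      fshift h (s i) (to_fract (psipol h m n p z lam s i)) / Z"
    by (simp add: swap_at_simps)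
  have "(\<Prod>k\<in>K. linf (- z k + of_int (?s' (i + 1)) * of_int (lamS m n (lam k) ?s' (i + 1)) * h)) =
      pshift h (s i) (phipol h m n p z lam s i)"
    unfolding phipol_def K_def[symmetric] pshift_prod
    by (intro prod.cong) (auto simp: swap_at_simps shifted[simplified] pshift_linf algebra_simps)
  with ratio[of ?s' "i + 1"] show "inverse (fratio h (s i) (to_fract (Tpol h m n p z lam ?s' (i + 1)))) =
      fshift h (s i) (to_fract (phipol h m n p z lam s i)) / Z"
    by (simp add: swap_at_simps)
qed

lemma Rcoef_fermionic_swap_at:
  assumes pw: "\<forall>k<p. polyweight m n (lam k)" and s: "s \<in> parseqs m n"
    and i: "1 \<le> i" "i < m + n" "s i \<noteq> s (i + 1)"
    and phi_def: "phi = to_fract (phipol h m n p z lam s i)" and psi_def: "psi = to_fract (psipol h m n p z lam s i)"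
    and Z_def: "Z = to_fract (\<Prod>k | k < p \<and> lamS m n (lam k) s i + lamS m n (lam k) s (i + 1) \<noteq> 0. linf (- z k))"
    and A_def: "A = to_fract (y (i - 1))" and Y_def: "Y = to_fract (y i)" and U_def: "U = to_fract u"
    and C_def: "C = to_fract (y (i + 1))"
  shows "Rcoef h m n p z lam s y i = phi / Z * fratio h (- s i) A * fratio h (s i) Y"
    and "Rcoef h m n p z lam s y (i + 1) = psi / Z * fratio h (s i) Y * fratio h (- s i) C"
    and "Rcoef h m n p z lam (swap_at i s) (y(i := u)) i =
           fshift h (s i) psi / Z * fratio h (s i) A * fratio h (- s i) U"
    and "Rcoef h m n p z lam (swap_at i s) (y(i := u)) (i + 1) =
           fshift h (s i) phi / Z * fratio h (- s i) U * fratio h (s i) C"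
proof -
  have e: "s (i + 1) = - s i"
    by (rule parseqs_neq_next[OF s i])
  have "i - 1 \<noteq> i"
    using i by simp
  then have upd: "(y(i := u)) (i - 1) = y (i - 1)" "(y(i := u)) i = u" "(y(i := u)) (i + 1 - 1) = u"
    "(y(i := u)) (i + 1) = y (i + 1)"
    by simp_all
  note T = fermionic_Tpol_fratio[OF pw s i Z_def, of h]
  show "Rcoef h m n p z lam s y i = phi / Z * fratio h (- s i) A * fratio h (s i) Y"
    "Rcoef h m n p z lam s y (i + 1) = psi / Z * fratio h (s i) Y * fratio h (- s i) C"
    "Rcoef h m n p z lam (swap_at i s) (y(i := u)) i =
       fshift h (s i) psi / Z * fratio h (s i) A * fratio h (- s i) U"
    "Rcoef h m n p z lam (swap_at i s) (y(i := u)) (i + 1) =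
       fshift h (s i) phi / Z * fratio h (- s i) U * fratio h (s i) C"
    using e T unfolding Rcoef_eq_fratio upd phi_def psi_def A_def Y_def U_def C_def
    by (simp_all add: swap_at_simps)
qed

lemma Rop_fermionic_step:
  assumes pw: "\<forall>k<p. polyweight m n (lam k)" and s: "s \<in> parseqs m n" and y: "valid_tuple m n y"
    and i: "1 \<le> i" "i < m + n" "s i \<noteq> s (i + 1)" and yt: "yt \<noteq> 0" and c: "c \<noteq> 0"
    and R: "y i * pshift h (- s i) yt =
              smult c (phipol h m n p z lam s i * pshift h (- s i) (y (i - 1)) * y (i + 1)
                 - psipol h m n p z lam s i * y (i - 1) * pshift h (- s i) (y (i + 1)))"
  shows "Rop h m n p z lam (swap_at i s) (y(i := yt)) = Rop h m n p z lam s y"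
proof (rule Rop_local[OF i(1,2)])
  let ?s' = "swap_at i s" and ?y' = "y(i := yt)"
  show "?s' j = s j \<and> Rcoef h m n p z lam ?s' ?y' j = Rcoef h m n p z lam s y j"
    if "j \<noteq> i" "j \<noteq> i + 1" for j
    using that Rcoef_fun_upd_other[OF that] Tpol_swap_at_other[OF pw s i that]
    by (simp add: Rcoef_def swap_at_simps)
  define A Y U C where A_def: "A = to_fract (y (i - 1))" and Y_def: "Y = to_fract (y i)"
    and U_def: "U = to_fract yt" and C_def: "C = to_fract (y (i + 1))"
  define phi psi where phi_def: "phi = to_fract (phipol h m n p z lam s i)"
    and psi_def: "psi = to_fract (psipol h m n p z lam s i)"
  define Z where "Z = to_fract (\<Prod>k | k < p \<and> lamS m n (lam k) s i + lamS m n (lam k) s (i + 1) \<noteq> 0. linf (- z k))"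
  define a b a' b' where a_def: "a = Rcoef h m n p z lam s y i" and b_def: "b = Rcoef h m n p z lam s y (i + 1)"
    and a'_def: "a' = Rcoef h m n p z lam ?s' ?y' i" and b'_def: "b' = Rcoef h m n p z lam ?s' ?y' (i + 1)"
  have nonzero: "A \<noteq> 0" "Y \<noteq> 0" "U \<noteq> 0" "C \<noteq> 0" "Z \<noteq> 0"
    using valid_tuple_nonzero[OF y] yt unfolding A_def Y_def U_def C_def Z_def by auto
  note coeffs = Rcoef_fermionic_swap_at[OF pw s i phi_def psi_def Z_def A_def Y_def U_def C_def,
      folded a_def b_def a'_def b'_def]
  have "Y * fshift h (- s i) U = to_fract [:c:] * (phi * fshift h (- s i) A * C - psi * A * fshift h (- s i) C)"
    using arg_cong[OF R, of to_fract]
    unfolding A_def Y_def U_def C_def phi_def psi_def by (simp add: to_fract_smult)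
  then have sum: "a + a' = b + b'"
    unfolding coeffs by (rule fermionic_coeff_sum[OF nonzero c])
  have "a' * fshift h 1 a = b' * fshift h 1 b" if "s i = 1"
    unfolding coeffs that by (rule fermionic_coeff_prod(1)[OF nonzero(1,4)])
  moreover have "b * fshift h 1 b' = a * fshift h 1 a'" if "s i = -1"
    unfolding coeffs that minus_minus by (rule fermionic_coeff_prod(2)[OF nonzero(1,4)])
  ultimately show "dop_mult h (dop_factor h (?s' i) a') (dop_factor h (?s' (i + 1)) b') =
      dop_mult h (dop_factor h (s i) a) (dop_factor h (s (i + 1)) b)"
    using parseqs_entry[OF s, of i] i parseqs_neq_next[OF s i]
    by (simp add: swap_at_simps dop_factor_pair_fermionic sum)
qed

section \<open>Continuity of \<open>\<R>\<^sup>s(y)\<close> in \<open>y\<close>\<close>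

definition poly_tendsto :: "(nat \<Rightarrow> complex poly) \<Rightarrow> complex poly \<Rightarrow> bool" where
  "poly_tendsto P q \<longleftrightarrow> (\<exists>d. \<forall>k. degree (P k) \<le> d) \<and> (\<forall>j. (\<lambda>k. coeff (P k) j) \<longlonglongrightarrow> coeff q j)"

lemma poly_tendsto_degree_bound:
  assumes "poly_tendsto P q"
  obtains d where "\<And>k. degree (P k) \<le> d" "degree q \<le> d"
proof -
  obtain d where d: "\<And>k. degree (P k) \<le> d"
    using assms unfolding poly_tendsto_def by blast
  have "coeff q j = 0" if "j > d" for j
  proof -
    have "(\<lambda>k. coeff (P k) j) = (\<lambda>k. 0)"
      using d that by (intro ext coeff_eq_0) (meson le_less_trans)
    moreover have "(\<lambda>k. coeff (P k) j) \<longlonglongrightarrow> coeff q j"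
      using assms unfolding poly_tendsto_def by blast
    ultimately show ?thesis
      using LIMSEQ_unique tendsto_const by metis
  qed
  then have "degree q \<le> d"
    by (intro degree_le) blast
  with d that show ?thesis
    by blast
qed

lemma poly_tendsto_const: "poly_tendsto (\<lambda>k. q) q"
  unfolding poly_tendsto_def by auto

lemma poly_tendsto_add:
  assumes "poly_tendsto P q" "poly_tendsto Q r"
  shows "poly_tendsto (\<lambda>k. P k + Q k) (q + r)"
proof -
  obtain d1 d2 where "\<And>k. degree (P k) \<le> d1" "\<And>k. degree (Q k) \<le> d2"
    using assms unfolding poly_tendsto_def by blast
  then have "degree (P k + Q k) \<le> max d1 d2" for k
    by (meson degree_add_le max.coboundedI1 max.coboundedI2)
  with assms show ?thesis
    unfolding poly_tendsto_def by (auto intro!: tendsto_add)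
qed

lemma poly_tendsto_uminus: "poly_tendsto P q \<Longrightarrow> poly_tendsto (\<lambda>k. - P k) (- q)"
  unfolding poly_tendsto_def by (auto intro!: tendsto_minus)

lemma poly_tendsto_mult:
  assumes "poly_tendsto P q" "poly_tendsto Q r"
  shows "poly_tendsto (\<lambda>k. P k * Q k) (q * r)"
proof -
  obtain d1 d2 where "\<And>k. degree (P k) \<le> d1" "\<And>k. degree (Q k) \<le> d2"
    using assms unfolding poly_tendsto_def by blast
  then have "degree (P k * Q k) \<le> d1 + d2" for k
    using degree_mult_le[of "P k" "Q k"] by (meson add_mono order_trans)
  with assms show ?thesis
    unfolding poly_tendsto_def coeff_mult by (auto intro!: tendsto_sum tendsto_mult)
qed

lemma poly_tendsto_unique: "poly_tendsto P q \<Longrightarrow> poly_tendsto P r \<Longrightarrow> q = r"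
  unfolding poly_tendsto_def by (auto intro: poly_eqI LIMSEQ_unique)

lemma pshift_eq_sum_monom:
  assumes "degree f \<le> d"
  shows "pshift h c f = (\<Sum>i\<le>d. smult (coeff f i) (pshift h c (monom 1 i)))"
proof -
  have "pshift h c f = pshift h c (\<Sum>i\<le>d. smult (coeff f i) (monom 1 i))"
    using poly_as_sum_of_monoms'[OF assms] by (simp add: smult_monom)
  then show ?thesis
    by (simp add: pshift_sum pshift_smult)
qed

lemma poly_tendsto_pshift:
  assumes "poly_tendsto P q"
  shows "poly_tendsto (\<lambda>k. pshift h c (P k)) (pshift h c q)"
proof -
  obtain d where d: "\<And>k. degree (P k) \<le> d" "degree q \<le> d"
    using poly_tendsto_degree_bound[OF assms] by blast
  have "(\<lambda>k. coeff (pshift h c (P k)) j) \<longlonglongrightarrow> coeff (pshift h c q) j" for j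
    unfolding pshift_eq_sum_monom[OF d(1)] pshift_eq_sum_monom[OF d(2)] coeff_sum coeff_smult
    using assms unfolding poly_tendsto_def by (auto intro!: tendsto_sum tendsto_mult)
  with d show ?thesis
    unfolding poly_tendsto_def by auto
qed

definition tuple_tendsto :: "nat \<Rightarrow> nat \<Rightarrow> (nat \<Rightarrow> nat \<Rightarrow> complex poly) \<Rightarrow> (nat \<Rightarrow> complex poly) \<Rightarrow> bool" where
  "tuple_tendsto m n u v \<longleftrightarrow> (\<forall>k. valid_tuple m n (u k)) \<and> valid_tuple m n v \<and>
     (\<exists>d. \<forall>k i. 1 \<le> i \<and> i < m + n \<longrightarrow> degree (u k i) \<le> d) \<and>
     (\<forall>i j. 1 \<le> i \<and> i < m + n \<longrightarrow> (\<lambda>k. coeff (u k i) j) \<longlonglongrightarrow> coeff (v i) j)"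

lemma tuple_tendsto_entry:
  assumes "tuple_tendsto m n u v"
  shows "poly_tendsto (\<lambda>k. u k i) (v i)"
proof (cases "1 \<le> i \<and> i < m + n")
  case False
  then have "i = 0 \<or> m + n \<le> i"
    by auto
  then have "u k i = 1" "v i = 1" for k
    using assms unfolding tuple_tendsto_def valid_tuple_def by blast+
  then show ?thesis
    using poly_tendsto_const by simp
qed (use assms in \<open>unfold tuple_tendsto_def poly_tendsto_def, blast\<close>)

definition seq_cont_poly :: "nat \<Rightarrow> nat \<Rightarrow> ((nat \<Rightarrow> complex poly) \<Rightarrow> complex poly) \<Rightarrow> bool" where
  "seq_cont_poly m n N \<longleftrightarrow> (\<forall>u v. tuple_tendsto m n u v \<longrightarrow> poly_tendsto (\<lambda>k. N (u k)) (N v))"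

lemma seq_cont_poly_const: "seq_cont_poly m n (\<lambda>y. q)"
  by (simp add: seq_cont_poly_def poly_tendsto_const)

lemma seq_cont_poly_entry: "seq_cont_poly m n (\<lambda>y. y i)"
  by (simp add: seq_cont_poly_def tuple_tendsto_entry)

lemma seq_cont_poly_add: "seq_cont_poly m n N \<Longrightarrow> seq_cont_poly m n M \<Longrightarrow> seq_cont_poly m n (\<lambda>y. N y + M y)"
  by (simp add: seq_cont_poly_def poly_tendsto_add)

lemma seq_cont_poly_mult: "seq_cont_poly m n N \<Longrightarrow> seq_cont_poly m n M \<Longrightarrow> seq_cont_poly m n (\<lambda>y. N y * M y)"
  by (simp add: seq_cont_poly_def poly_tendsto_mult)

lemma seq_cont_poly_uminus: "seq_cont_poly m n N \<Longrightarrow> seq_cont_poly m n (\<lambda>y. - N y)"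
  by (simp add: seq_cont_poly_def poly_tendsto_uminus)

lemma seq_cont_poly_pshift: "seq_cont_poly m n N \<Longrightarrow> seq_cont_poly m n (\<lambda>y. pshift h c (N y))"
  by (simp add: seq_cont_poly_def poly_tendsto_pshift)

definition seq_cont_fract :: "nat \<Rightarrow> nat \<Rightarrow> ((nat \<Rightarrow> complex poly) \<Rightarrow> complex poly fract) \<Rightarrow> bool" where
  "seq_cont_fract m n g \<longleftrightarrow> (\<exists>N D. seq_cont_poly m n N \<and> seq_cont_poly m n D \<and>
      (\<forall>y. valid_tuple m n y \<longrightarrow> D y \<noteq> 0 \<and> g y = Fract (N y) (D y)))"

lemma seq_cont_fractE:
  assumes "seq_cont_fract m n g"
  obtains N D where "seq_cont_poly m n N" "seq_cont_poly m n D"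
    "\<And>y. valid_tuple m n y \<Longrightarrow> D y \<noteq> 0" "\<And>y. valid_tuple m n y \<Longrightarrow> g y = Fract (N y) (D y)"
  using assms unfolding seq_cont_fract_def by blast

lemma seq_cont_fract_const: "seq_cont_fract m n (\<lambda>y. c)"
proof (cases c)
  case (Fract a b)
  then show ?thesis
    unfolding seq_cont_fract_def
    by (intro exI[of _ "\<lambda>y. a"] exI[of _ "\<lambda>y. b"]) (simp add: seq_cont_poly_const)
qed

lemma seq_cont_fract_add:
  assumes "seq_cont_fract m n f" "seq_cont_fract m n g"
  shows "seq_cont_fract m n (\<lambda>y. f y + g y)"
proof -
  obtain N1 D1 N2 D2 where "seq_cont_poly m n N1" "seq_cont_poly m n D1" "seq_cont_poly m n N2" "seq_cont_poly m n D2"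
    "\<And>y. valid_tuple m n y \<Longrightarrow> D1 y \<noteq> 0 \<and> f y = Fract (N1 y) (D1 y) \<and> D2 y \<noteq> 0 \<and> g y = Fract (N2 y) (D2 y)"
    using assms by (metis seq_cont_fractE)
  then show ?thesis
    unfolding seq_cont_fract_def
    by (intro exI[of _ "\<lambda>y. N1 y * D2 y + N2 y * D1 y"] exI[of _ "\<lambda>y. D1 y * D2 y"])
       (auto intro!: seq_cont_poly_add seq_cont_poly_mult)
qed

lemma seq_cont_fract_mult:
  assumes "seq_cont_fract m n f" "seq_cont_fract m n g"
  shows "seq_cont_fract m n (\<lambda>y. f y * g y)"
proof -
  obtain N1 D1 N2 D2 where "seq_cont_poly m n N1" "seq_cont_poly m n D1" "seq_cont_poly m n N2" "seq_cont_poly m n D2"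
    "\<And>y. valid_tuple m n y \<Longrightarrow> D1 y \<noteq> 0 \<and> f y = Fract (N1 y) (D1 y) \<and> D2 y \<noteq> 0 \<and> g y = Fract (N2 y) (D2 y)"
    using assms by (metis seq_cont_fractE)
  then show ?thesis
    unfolding seq_cont_fract_def
    by (intro exI[of _ "\<lambda>y. N1 y * N2 y"] exI[of _ "\<lambda>y. D1 y * D2 y"])
       (auto intro!: seq_cont_poly_mult)
qed

lemma seq_cont_fract_uminus:
  assumes "seq_cont_fract m n f"
  shows "seq_cont_fract m n (\<lambda>y. - f y)"
proof -
  obtain N D where "seq_cont_poly m n N" "seq_cont_poly m n D"
    "\<And>y. valid_tuple m n y \<Longrightarrow> D y \<noteq> 0 \<and> f y = Fract (N y) (D y)"
    using assms by (metis seq_cont_fractE)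
  then show ?thesis
    unfolding seq_cont_fract_def
    by (intro exI[of _ "\<lambda>y. - N y"] exI[of _ D]) (auto intro!: seq_cont_poly_uminus)
qed

lemma seq_cont_fract_fshift:
  assumes "seq_cont_fract m n f"
  shows "seq_cont_fract m n (\<lambda>y. fshift h c (f y))"
proof -
  obtain N D where "seq_cont_poly m n N" "seq_cont_poly m n D"
    "\<And>y. valid_tuple m n y \<Longrightarrow> D y \<noteq> 0 \<and> f y = Fract (N y) (D y)"
    using assms by (metis seq_cont_fractE)
  then show ?thesis
    unfolding seq_cont_fract_def
    by (intro exI[of _ "\<lambda>y. pshift h c (N y)"] exI[of _ "\<lambda>y. pshift h c (D y)"])
       (auto intro!: seq_cont_poly_pshift simp: fshift_Fract)
qed

lemma seq_cont_fract_sum: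
  "finite A \<Longrightarrow> (\<And>i. i \<in> A \<Longrightarrow> seq_cont_fract m n (f i)) \<Longrightarrow> seq_cont_fract m n (\<lambda>y. \<Sum>i\<in>A. f i y)"
  by (induction A rule: finite_induct) (auto intro: seq_cont_fract_const seq_cont_fract_add)

lemma seq_cont_fract_prod:
  "finite A \<Longrightarrow> (\<And>i. i \<in> A \<Longrightarrow> seq_cont_fract m n (f i)) \<Longrightarrow> seq_cont_fract m n (\<lambda>y. \<Prod>i\<in>A. f i y)"
  by (induction A rule: finite_induct) (auto intro: seq_cont_fract_const seq_cont_fract_mult)

lemma seq_cont_fract_limit:
  assumes g: "seq_cont_fract m n g" and uv: "tuple_tendsto m n u v" and const: "\<And>k. g (u k) = c"
  shows "g v = c"
proof -
  obtain N D where ND: "seq_cont_poly m n N" "seq_cont_poly m n D"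
    and D: "\<And>y. valid_tuple m n y \<Longrightarrow> D y \<noteq> 0" and g_eq: "\<And>y. valid_tuple m n y \<Longrightarrow> g y = Fract (N y) (D y)"
    using seq_cont_fractE[OF g] by blast
  obtain a b where c: "c = Fract a b" "b \<noteq> 0"
    by (cases c) auto
  have valid: "valid_tuple m n (u k)" "valid_tuple m n v" for k
    using uv unfolding tuple_tendsto_def by auto
  have "N (u k) * b = a * D (u k)" for k
    using const[of k] g_eq[OF valid(1)] D[OF valid(1)] c by (simp add: eq_fract)
  moreover have "poly_tendsto (\<lambda>k. N (u k) * b) (N v * b)" "poly_tendsto (\<lambda>k. a * D (u k)) (a * D v)"
    using ND uv unfolding seq_cont_poly_def by (auto intro!: poly_tendsto_mult poly_tendsto_const)
  ultimately have "N v * b = a * D v"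
    using poly_tendsto_unique by simp
  with c D[OF valid(2)] show ?thesis
    by (simp add: g_eq[OF valid(2)] eq_fract)
qed

definition seq_cont_dop :: "nat \<Rightarrow> nat \<Rightarrow> ((nat \<Rightarrow> complex poly) \<Rightarrow> dop) \<Rightarrow> bool" where
  "seq_cont_dop m n G \<longleftrightarrow> (\<forall>k. seq_cont_fract m n (\<lambda>y. G y k))"

lemma seq_cont_dop_mult:
  "seq_cont_dop m n A \<Longrightarrow> seq_cont_dop m n B \<Longrightarrow> seq_cont_dop m n (\<lambda>y. dop_mult h (A y) (B y))"
  unfolding seq_cont_dop_def dop_mult_def
  by (auto intro!: seq_cont_fract_sum seq_cont_fract_mult seq_cont_fract_fshift)

lemma seq_cont_dop_factor:
  assumes "seq_cont_fract m n a"
  shows "seq_cont_dop m n (\<lambda>y. dop_factor h e (a y))"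
proof -
  have "seq_cont_fract m n (\<lambda>y. dop_lin (a y) k)" for k
    unfolding dop_lin_def using seq_cont_fract_uminus[OF assms]
    by (cases "k = 0"; cases "k = 1") (simp_all add: seq_cont_fract_const)
  moreover have "seq_cont_fract m n (\<lambda>y. dop_lin_inv h (a y) k)" for k
    unfolding dop_lin_inv_def using assms by (auto intro!: seq_cont_fract_prod seq_cont_fract_fshift)
  ultimately show ?thesis
    unfolding seq_cont_dop_def dop_factor_def by (cases "e = 1") simp_all
qed

lemma seq_cont_fract_Rcoef: "seq_cont_fract m n (\<lambda>y. Rcoef h m n p z lam s y i)"
  unfolding seq_cont_fract_def Rcoef_def
  by (intro exI conjI allI impI refl)
     (auto intro!: seq_cont_poly_mult seq_cont_poly_const seq_cont_poly_entry seq_cont_poly_pshift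
           simp: valid_tuple_nonzero)

lemma seq_cont_dop_Rop: "seq_cont_dop m n (\<lambda>y. Rop h m n p z lam s y)"
proof -
  have "seq_cont_dop m n
      (\<lambda>y. foldl (\<lambda>A i. dop_mult h A (dop_factor h (s i) (Rcoef h m n p z lam s y i))) (A0 y) is)"
    if "seq_cont_dop m n A0" for A0 "is"
    using that
  proof (induction "is" arbitrary: A0)
    case (Cons i "is")
    then show ?case
      by (simp add: seq_cont_dop_mult seq_cont_dop_factor seq_cont_fract_Rcoef)
  qed simp
  then show ?thesis
    unfolding Rop_def by (simp add: seq_cont_dop_def seq_cont_fract_const)
qed

section \<open>Populations\<close>

lemma repro_step_invariant:
  assumes pw: "\<forall>k<p. polyweight m n (lam k)" and step: "repro_step h m n p z lam (y, s) (y', s')"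
    and s: "s \<in> parseqs m n" and y: "valid_tuple m n y"
  shows "s' \<in> parseqs m n \<and> valid_tuple m n y' \<and> Rop h m n p z lam s' y' = Rop h m n p z lam s y"
proof -
  obtain i yt where i: "1 \<le> i" "i < m + n" and yt: "yt \<noteq> 0" and y': "y' = y(i := yt)"
    and cases: "(s i = s (i + 1) \<and> s' = s \<and>
           (\<exists>c. c \<noteq> 0 \<and> Wr h (s i) (y i) yt * Tpol h m n p z lam s (i + 1) =
              smult c (Tpol h m n p z lam s i * pshift h (- s i) (y (i - 1)) * y (i + 1))))
        \<or> (s i \<noteq> s (i + 1) \<and> s' = swap_at i s \<and>
           (\<exists>c. c \<noteq> 0 \<and> y i * pshift h (- s i) yt =
              smult c (phipol h m n p z lam s i * pshift h (- s i) (y (i - 1)) * y (i + 1)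
                 - psipol h m n p z lam s i * y (i - 1) * pshift h (- s i) (y (i + 1)))))"
    using step unfolding repro_step_def by auto
  have "valid_tuple m n y'"
    using y i yt unfolding y' valid_tuple_def by auto
  moreover have "s' \<in> parseqs m n \<and> Rop h m n p z lam s' y' = Rop h m n p z lam s y"
    using cases
  proof (elim disjE conjE exE)
    fix c
    assume "s i = s (i + 1)" "s' = s" and W: "Wr h (s i) (y i) yt * Tpol h m n p z lam s (i + 1) =
              smult c (Tpol h m n p z lam s i * pshift h (- s i) (y (i - 1)) * y (i + 1))"
    with s i show ?thesis
      unfolding y' by (metis Rop_bosonic_step[OF y i(1,2) _ _ yt W] parseqs_entry less_imp_le_nat)
  next
    fix c
    assume "s i \<noteq> s (i + 1)" "s' = swap_at i s" "c \<noteq> 0" and R: "y i * pshift h (- s i) yt =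
              smult c (phipol h m n p z lam s i * pshift h (- s i) (y (i - 1)) * y (i + 1)
                 - psipol h m n p z lam s i * y (i - 1) * pshift h (- s i) (y (i + 1)))"
    with pw s y i yt show ?thesis
      unfolding y' using Rop_fermionic_step swap_at_parseqs by blast
  qed
  ultimately show ?thesis
    by blast
qed

definition Rop_level_set :: "complex \<Rightarrow> nat \<Rightarrow> nat \<Rightarrow> nat \<Rightarrow> (nat \<Rightarrow> complex) \<Rightarrow> (nat \<Rightarrow> nat \<Rightarrow> int)
     \<Rightarrow> dop \<Rightarrow> ((nat \<Rightarrow> complex poly) \<times> (nat \<Rightarrow> int)) set" where
  "Rop_level_set h m n p z lam R =
     {(v, s). s \<in> parseqs m n \<and> valid_tuple m n v \<and> Rop h m n p z lam s v = R}"

lemma pop_closed_Rop_level_set: "pop_closed m n (Rop_level_set h m n p z lam R)"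
  unfolding pop_closed_def
proof (intro allI impI)
  fix d s u v
  assume lim: "(\<forall>k. (u k, s) \<in> Rop_level_set h m n p z lam R) \<and>
      (\<forall>k i. 1 \<le> i \<and> i < m + n \<longrightarrow> degree (u k i) \<le> d) \<and> valid_tuple m n v \<and>
      (\<forall>i j. 1 \<le> i \<and> i < m + n \<longrightarrow> (\<lambda>k. coeff (u k i) j) \<longlonglongrightarrow> coeff (v i) j)"
  then have uv: "tuple_tendsto m n u v"
    unfolding tuple_tendsto_def Rop_level_set_def by blast
  have "Rop h m n p z lam s (u k) j = R j" for k j
    using lim unfolding Rop_level_set_def by auto
  then have "Rop h m n p z lam s v j = R j" for j
    using seq_cont_dop_Rop[of m n h p z lam s] seq_cont_fract_limit[OF _ uv]
    unfolding seq_cont_dop_def by blast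
  with lim show "(v, s) \<in> Rop_level_set h m n p z lam R"
    unfolding Rop_level_set_def by auto
qed

lemma population_subset_Rop_level_set:
  assumes pw: "\<forall>k<p. polyweight m n (lam k)" and s: "s \<in> parseqs m n" and y: "valid_tuple m n y"
  shows "population h m n p z lam y s \<subseteq> Rop_level_set h m n p z lam (Rop h m n p z lam s y)"
proof -
  have "b \<in> Rop_level_set h m n p z lam (Rop h m n p z lam s y)"
    if "(repro_step h m n p z lam)\<^sup>*\<^sup>* (y, s) b" for b
    using that
  proof (induction rule: rtranclp_induct)
    case base
    with s y show ?case
      unfolding Rop_level_set_def by simp
  next
    case (step b c)
    obtain y1 s1 y2 s2 where bc: "b = (y1, s1)" "c = (y2, s2)"
      by (cases b, cases c)
    with step.IH have "s1 \<in> parseqs m n" "valid_tuple m n y1" "Rop h m n p z lam s1 y1 = Rop h m n p z lam s y"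
      unfolding Rop_level_set_def by auto
    with repro_step_invariant[OF pw step.hyps(2)[unfolded bc]] show ?case
      unfolding bc Rop_level_set_def by simp
  qed
  then have "Rop_level_set h m n p z lam (Rop h m n p z lam s y) \<in>
      {C. {b. (repro_step h m n p z lam)\<^sup>*\<^sup>* (y, s) b} \<subseteq> C \<and> pop_closed m n C}"
    using pop_closed_Rop_level_set by auto
  then show ?thesis
    unfolding population_def by (rule Inter_lower)
qed

theorem theorem5p3:
  fixes h :: complex and m n p :: nat and z :: "nat \<Rightarrow> complex"
    and lam :: "nat \<Rightarrow> nat \<Rightarrow> int"
    and y :: "nat \<Rightarrow> complex poly" and s :: "nat \<Rightarrow> int"
  assumes "h \<noteq> 0"
    and "hgeneric h p z"
    and "\<forall>k<p. polyweight m n (lam k)"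
    and "s \<in> parseqs m n"
    and "valid_tuple m n y"
    and "generic h m n p z lam s y"
    and "represents_bae h m n p z lam s y"
  shows "\<forall>a\<in>population h m n p z lam y s. \<forall>b\<in>population h m n p z lam y s.
           Rop h m n p z lam (snd a) (fst a) = Rop h m n p z lam (snd b) (fst b)"
proof -
  have "Rop h m n p z lam (snd a) (fst a) = Rop h m n p z lam s y" if "a \<in> population h m n p z lam y s" for a
    using population_subset_Rop_level_set[OF assms(3,4,5)] that
    unfolding Rop_level_set_def by (cases a) auto
  then show ?thesis
    by simp
qed

end
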